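(* Let $P_Z$ be a distribution on $\mathcal{Z}$, let $S=(Z_1,\ldots,Z_n)$ consist of $n$ i.i.d. samples from $P_Z$, and let $W$ take values in a Polish metric space $(\mathcal{W},\rho)$ with conditional distribution $P_{W|S}$. Let $J$ be a uniformly random subset of $[n]$ of size $m$, independent of $(W,S)$. Then $$\frac1n\sum_{i=1}^n\mathbb{E}\big[\mathbb{W}(P_{W|Z_i},P_W)\big]\le\mathbb{E}\big[\mathbb{W}(P_{W|S},P_{W|S_{J^c}})\big].$$
   Context: For $j\subseteq[n]$, $S_j=(Z_i)_{i\in j}$, $j^c=[n]\setminus j$, and $P_{W|S_{j^c}}$ is the conditional law of $W$ given $S_{j^c}$. $\mathbb{W}$ is the order-1 Wasserstein distance with respect to $\rho$: $\mathbb{W}(P,Q)=\inf_{R\in\Pi(P,Q)}\int\rho\,dR$ over couplings. *)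

theory Defs
  imports "HOL-Probability.Probability"
begin

definition couplings :: "'w::polish_space measure \<Rightarrow> 'w measure \<Rightarrow> ('w \<times> 'w) measure set" where
  "couplings P Q = {R. prob_space R \<and> sets R = sets (borel :: ('w \<times> 'w) measure)
      \<and> distr R borel fst = P \<and> distr R borel snd = Q}"

definition wasserstein1 :: "'w::polish_space measure \<Rightarrow> 'w measure \<Rightarrow> ennreal" where
  "wasserstein1 P Q = (INF R \<in> couplings P Q. \<integral>\<^sup>+ x. ennreal (dist (fst x) (snd x)) \<partial>R)"

definition sample_law :: "nat \<Rightarrow> 'z measure \<Rightarrow> (nat \<Rightarrow> 'z) measure" where
  "sample_law n PZ = PiM {..<n} (\<lambda>_. PZ)"

text \<open>Marginal law P_W of W, where K s = P_{W|S=s}.\<close>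
definition law_W :: "nat \<Rightarrow> 'z measure \<Rightarrow> ((nat \<Rightarrow> 'z) \<Rightarrow> 'w measure) \<Rightarrow> 'w measure" where
  "law_W n PZ K = bind (sample_law n PZ) K"

text \<open>Conditional law P_{W|Z_i = z}: integrate the kernel over the other (independent) samples.\<close>
definition law_W_given_Zi ::
  "nat \<Rightarrow> 'z measure \<Rightarrow> ((nat \<Rightarrow> 'z) \<Rightarrow> 'w measure) \<Rightarrow> nat \<Rightarrow> 'z \<Rightarrow> 'w measure" where
  "law_W_given_Zi n PZ K i z = bind (sample_law n PZ) (\<lambda>s. K (s(i := z)))"

text \<open>Conditional law P_{W|S_{J^c}}, evaluated at the sample s (only s restricted to
  [n] - J matters): integrate the kernel over fresh samples on the coordinates in J.\<close>
definition law_W_given_compl ::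
  "nat \<Rightarrow> 'z measure \<Rightarrow> ((nat \<Rightarrow> 'z) \<Rightarrow> 'w measure) \<Rightarrow> nat set \<Rightarrow> (nat \<Rightarrow> 'z) \<Rightarrow> 'w measure" where
  "law_W_given_compl n PZ K J s =
     bind (PiM J (\<lambda>_. PZ)) (\<lambda>t. K (merge J ({..<n} - J) (t, s)))"

end

theory Submission
  imports Defs
begin

text \<open>
  Fix i \<in> J. Both P_{W|Z_i=z} and P_W are mixtures over the sample s, of K (s(i := z)) and of
  P_{W|S_{J^c}} (s(i := z)) respectively: P_{W|S_{J^c}} ignores the coordinate i and averages
  back to P_W. Joint convexity of the Wasserstein distance under mixtures therefore bounds
  W(P_{W|Z_i=z}, P_W) by the average of W(K (s(i := z)), P_{W|S_{J^c}} (s(i := z))), and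
  integrating over z and resampling the i-th coordinate turns this into
  E W(P_{W|S}, P_{W|S_{J^c}}). Each i lies in (n-1 choose m-1) of the (n choose m) sets J,
  so averaging over i and J gives the claim.

  Convexity needs near-optimal couplings chosen measurably in s. We discretise: the space is
  cut into countably many Borel cells of radius e, couplings are compared with discrete
  couplings of the cell masses (losing 2e each way), discrete couplings are approximated by
  finite rational matrices completed to couplings (a countable family, in which the first
  \<delta>-optimal member is a measurable choice), and the cost is truncated at level M, the
  truncation being removed at the end by a diagonal subsequence argument.
\<close>


lemma ennreal_le_suminf: "(f i :: ennreal) \<le> (\<Sum>i. f i)"
  using sum_le_suminf[OF summableI, of "{i}" f] by simp

lemma ennreal_mult_inverse_cancel:
  fixes x y :: ennreal
  assumes "x \<le> y" "y \<noteq> \<top>"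
  shows "x * inverse y * y = x"
proof (cases "y = 0")
  case False
  then have "inverse y * y = 1"
    using assms(2) by (metis mult.commute divide_ennreal_def divide_eq_1_ennreal)
  then show ?thesis by (simp add: mult.assoc)
qed (use assms in simp)

lemma ennreal_suminf_suminf_eq_SUP:
  "(\<Sum>k. \<Sum>l. f k l :: ennreal) = (SUP a. SUP b. \<Sum>k<a. \<Sum>l<b. f k l)"
proof -
  have "(\<Sum>k. \<Sum>l. f k l) = (SUP a. \<Sum>k<a. \<Sum>l. f k l)" by (rule suminf_eq_SUP)
  also have "\<dots> = (SUP a. \<Sum>l. \<Sum>k<a. f k l)"
    by (subst suminf_sum[OF summableI]) simp
  also have "\<dots> = (SUP a. SUP b. \<Sum>l<b. \<Sum>k<a. f k l)" by (simp only: suminf_eq_SUP)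
  also have "\<dots> = (SUP a. SUP b. \<Sum>k<a. \<Sum>l<b. f k l)" by (intro SUP_cong refl sum.swap)
  finally show ?thesis .
qed

lemma ennreal_suminf_swap: "(\<Sum>k. \<Sum>l. f k l :: ennreal) = (\<Sum>l. \<Sum>k. f k l)"
proof -
  have "(\<Sum>k. \<Sum>l. f k l) = (SUP b. SUP a. \<Sum>k<a. \<Sum>l<b. f k l)"
    unfolding ennreal_suminf_suminf_eq_SUP by (rule SUP_commute)
  also have "\<dots> = (\<Sum>l. \<Sum>k. f k l)"
    unfolding ennreal_suminf_suminf_eq_SUP[of "\<lambda>l k. f k l"] by (intro SUP_cong refl sum.swap)
  finally show ?thesis .
qed

lemma ennreal_sum_lessThan_le_suminf: "(\<Sum>k<a. \<Sum>l<b. f k l :: ennreal) \<le> (\<Sum>k. \<Sum>l. f k l)"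
  unfolding ennreal_suminf_suminf_eq_SUP by (intro SUP_upper2[of a] SUP_upper2[of b]) auto

lemma le_INF_plus_ennreal:
  fixes X :: ennreal
  assumes "\<And>R. R \<in> A \<Longrightarrow> X \<le> f R + ennreal c"
  shows "X \<le> (INF R\<in>A. f R) + ennreal c"
proof -
  have "X - ennreal c \<le> (INF R\<in>A. f R)"
    using assms by (intro INF_greatest) (simp add: ennreal_minus_le_iff add.commute)
  then have "X - ennreal c + ennreal c \<le> (INF R\<in>A. f R) + ennreal c" by (rule add_right_mono)
  moreover have "X \<le> X - ennreal c + ennreal c"
    by (auto simp: diff_add_self_ennreal not_le intro: less_imp_le)
  ultimately show ?thesis by (rule order_trans[rotated])
qed

lemma nn_integral_le_plus_const:
  assumes "prob_space M" "g \<in> borel_measurable M"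
    and "\<And>x. x \<in> space M \<Longrightarrow> g x \<le> f x + ennreal c"
  shows "integral\<^sup>N M g \<le> integral\<^sup>N M f + ennreal c"
proof -
  interpret prob_space M by fact
  have "integral\<^sup>N M g \<le> (\<integral>\<^sup>+ x. (g x - ennreal c) + ennreal c \<partial>M)"
    by (intro nn_integral_mono) (auto simp: diff_add_self_ennreal not_le intro: less_imp_le)
  also have "\<dots> = (\<integral>\<^sup>+ x. g x - ennreal c \<partial>M) + ennreal c"
    using assms(2) by (subst nn_integral_add) (auto simp: emeasure_space_1)
  also have "(\<integral>\<^sup>+ x. g x - ennreal c \<partial>M) \<le> integral\<^sup>N M f"
    using assms(3) by (intro nn_integral_mono) (simp add: ennreal_minus_le_iff add.commute)
  finally show ?thesis by (simp add: add_right_mono)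
qed

lemma space_eq_UNIV_if_sets_borel:
  "sets M = sets (borel :: 'a::topological_space measure) \<Longrightarrow> space M = UNIV"
  using sets_eq_imp_space_eq[of M borel] by simp

lemma couplingsD:
  assumes "R \<in> couplings P Q"
  shows "prob_space R" "sets R = sets (borel :: ('w::polish_space \<times> 'w) measure)"
    "distr R borel fst = P" "distr R borel snd = Q"
  using assms unfolding couplings_def by auto

lemma couplingsI:
  assumes "prob_space R" "sets R = sets (borel :: ('w::polish_space \<times> 'w) measure)"
    and "\<And>A. A \<in> sets borel \<Longrightarrow> emeasure R (A \<times> UNIV) = emeasure P A"
    and "\<And>B. B \<in> sets borel \<Longrightarrow> emeasure R (UNIV \<times> B) = emeasure Q B"
    and "sets P = sets borel" "sets Q = sets borel"
  shows "R \<in> couplings P Q"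
proof -
  have spR: "space R = UNIV" using assms(2) space_eq_UNIV_if_sets_borel by blast
  have sR: "sets R = sets (borel \<Otimes>\<^sub>M borel)" using assms(2) borel_prod by metis
  have [measurable]: "fst \<in> R \<rightarrow>\<^sub>M borel" "snd \<in> R \<rightarrow>\<^sub>M borel"
    using measurable_fst[of borel borel] measurable_snd[of borel borel]
      measurable_cong_sets[OF sR refl] by blast+
  have "distr R borel fst = P"
  proof (rule measure_eqI)
    fix A assume "A \<in> sets (distr R borel fst)"
    then have "A \<in> sets borel" by simp
    moreover have "fst -` A \<inter> space R = A \<times> UNIV" using spR by auto
    ultimately show "emeasure (distr R borel fst) A = emeasure P A"
      using assms(3) by (simp add: emeasure_distr)
  qed (use assms(5) in simp)
  moreover have "distr R borel snd = Q"
  proof (rule measure_eqI)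
    fix B assume "B \<in> sets (distr R borel snd)"
    then have "B \<in> sets borel" by simp
    moreover have "snd -` B \<inter> space R = UNIV \<times> B" using spR by auto
    ultimately show "emeasure (distr R borel snd) B = emeasure Q B"
      using assms(4) by (simp add: emeasure_distr)
  qed (use assms(6) in simp)
  ultimately show ?thesis using assms(1,2) unfolding couplings_def by blast
qed

lemma emeasure_coupling_Times_UNIV:
  assumes "R \<in> couplings P Q" "A \<in> sets borel"
  shows "emeasure R (A \<times> UNIV) = emeasure P A"
proof -
  note R = couplingsD[OF assms(1)]
  have "fst -` A \<inter> space R = A \<times> UNIV" using space_eq_UNIV_if_sets_borel[OF R(2)] by auto
  then show ?thesis
    using emeasure_distr[of fst R borel A] R(2-3) assms(2)
    by (simp add: measurable_cong_sets[OF R(2) refl] borel_prod[symmetric])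
qed

lemma emeasure_coupling_UNIV_Times:
  assumes "R \<in> couplings P Q" "B \<in> sets borel"
  shows "emeasure R (UNIV \<times> B) = emeasure Q B"
proof -
  note R = couplingsD[OF assms(1)]
  have "snd -` B \<inter> space R = UNIV \<times> B" using space_eq_UNIV_if_sets_borel[OF R(2)] by auto
  then show ?thesis
    using emeasure_distr[of snd R borel B] R(2,4) assms(2)
    by (simp add: measurable_cong_sets[OF R(2) refl] borel_prod[symmetric])
qed

lemma prob_kernelD:
  assumes "K \<in> M \<rightarrow>\<^sub>M prob_algebra N" "x \<in> space M"
  shows "prob_space (K x)" "sets (K x) = sets N"
  using measurable_space[OF assms] by (auto simp: space_prob_algebra)

section \<open>Cells of a separable metric space\<close>

definition cell :: "(nat \<Rightarrow> 'a::metric_space) \<Rightarrow> real \<Rightarrow> nat \<Rightarrow> 'a set" where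
  "cell c e k = ball (c k) e - (\<Union>j<k. ball (c j) e)"

lemma cell_borel[measurable]: "cell c e k \<in> sets borel"
  unfolding cell_def by auto

lemma disjoint_family_cell: "disjoint_family (cell c e)"
  unfolding disjoint_family_on_def cell_def
  by (auto, metis linorder_neqE_nat lessThan_iff)

lemma dist_centre_less: "x \<in> cell c e k \<Longrightarrow> dist x (c k) < e"
  unfolding cell_def by (auto simp: dist_commute)

lemma ex_dense_sequence:
  obtains c :: "nat \<Rightarrow> 'a::{metric_space, second_countable_topology}"
  where "\<And>x e. 0 < e \<Longrightarrow> \<exists>k. dist (c k) x < e"
proof -
  obtain D :: "'a set" where D: "countable D" "\<And>X. open X \<Longrightarrow> X \<noteq> {} \<Longrightarrow> \<exists>d\<in>D. d \<in> X"
    using countable_dense_exists by blast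
  have "\<exists>k. dist (from_nat_into D k) x < e" if "0 < e" for x e
  proof -
    obtain d where "d \<in> D" "d \<in> ball x e" using D(2)[of "ball x e"] \<open>0 < e\<close> by auto
    then show ?thesis using from_nat_into_surj[OF D(1)] by (metis dist_commute mem_ball)
  qed
  then show ?thesis by (rule that)
qed

locale cell_partition =
  fixes c :: "nat \<Rightarrow> 'w::polish_space" and e :: real
  assumes covering: "\<And>x. \<exists>k. dist (c k) x < e"
begin

lemma e_pos: "0 < e"
  using covering[of undefined] by (auto intro: le_less_trans[OF zero_le_dist])

lemma ex_cell: "\<exists>k. x \<in> cell c e k"
proof -
  define k where "k = (LEAST k. x \<in> ball (c k) e)"
  have "x \<in> ball (c k) e"
    unfolding k_def by (rule LeastI_ex) (use covering[of x] in auto)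
  moreover have "x \<notin> ball (c j) e" if "j < k" for j
    using not_less_Least[OF that[unfolded k_def]] by blast
  ultimately show ?thesis unfolding cell_def by blast
qed

lemma centre_dist_le:
  assumes "x \<in> cell c e k" "y \<in> cell c e l"
  shows "dist (c k) (c l) \<le> dist x y + 2 * e"
proof -
  have "dist (c k) (c l) \<le> dist (c k) x + dist x (c l)" by (rule dist_triangle)
  also have "dist x (c l) \<le> dist x y + dist y (c l)" by (rule dist_triangle)
  finally have "dist (c k) (c l) \<le> dist (c k) x + dist x y + dist y (c l)" by simp
  then show ?thesis
    using dist_centre_less[OF assms(1)] dist_centre_less[OF assms(2)] by (simp add: dist_commute)
qed

lemma dist_le_centre_dist:
  assumes "x \<in> cell c e k" "y \<in> cell c e l"
  shows "dist x y \<le> dist (c k) (c l) + 2 * e"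
proof -
  have "dist x y \<le> dist x (c k) + dist (c k) y" by (rule dist_triangle)
  also have "dist (c k) y \<le> dist (c k) (c l) + dist (c l) y" by (rule dist_triangle)
  finally have "dist x y \<le> dist x (c k) + dist (c k) (c l) + dist (c l) y" by simp
  then show ?thesis
    using dist_centre_less[OF assms(1)] dist_centre_less[OF assms(2)] by (simp add: dist_commute)
qed

lemma suminf_emeasure_Int_cell:
  assumes "sets P = sets borel" "A \<in> sets borel"
  shows "(\<Sum>k. emeasure P (A \<inter> cell c e k)) = emeasure P A"
proof -
  have "(\<Sum>k. emeasure P (A \<inter> cell c e k)) = emeasure P (\<Union>k. A \<inter> cell c e k)"
    using assms disjoint_family_cell[of c e]
    by (intro suminf_emeasure) (auto simp: disjoint_family_on_def)
  also have "(\<Union>k. A \<inter> cell c e k) = A" using ex_cell by blast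
  finally show ?thesis .
qed

lemma suminf_emeasure_cell:
  assumes "prob_space P" "sets P = sets borel"
  shows "(\<Sum>k. emeasure P (cell c e k)) = 1"
  using suminf_emeasure_Int_cell[OF assms(2), of UNIV] prob_space.emeasure_space_1[OF assms(1)]
    space_eq_UNIV_if_sets_borel[OF assms(2)] by simp

lemma suminf_suminf_indicator_cell:
  assumes "x \<in> cell c e k" "y \<in> cell c e l"
  shows "(\<Sum>k'. \<Sum>l'. indicator (cell c e k' \<times> cell c e l') (x, y) * f k' l') = (f k l :: ennreal)"
proof -
  have "indicator (cell c e k' \<times> cell c e l') (x, y) * f k' l'
      = (f k' l' * indicator (cell c e l') y) * indicator (cell c e k') x" for k' l'
    by (simp add: indicator_times ac_simps)
  then show ?thesis
    using assms by (simp only: ennreal_suminf_multc suminf_cmult_indicator[OF disjoint_family_cell])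
qed

end

section \<open>Discrete couplings of cell masses\<close>

definition disc_coupling ::
  "(nat \<Rightarrow> nat \<Rightarrow> ennreal) \<Rightarrow> (nat \<Rightarrow> ennreal) \<Rightarrow> (nat \<Rightarrow> ennreal) \<Rightarrow> bool" where
  "disc_coupling \<theta> p q \<longleftrightarrow> (\<forall>k. (\<Sum>l. \<theta> k l) = p k) \<and> (\<forall>l. (\<Sum>k. \<theta> k l) = q l)"

definition disc_cost :: "(nat \<Rightarrow> nat \<Rightarrow> real) \<Rightarrow> (nat \<Rightarrow> nat \<Rightarrow> ennreal) \<Rightarrow> ennreal" where
  "disc_cost D \<theta> = (\<Sum>k. \<Sum>l. \<theta> k l * ennreal (D k l))"

lemma disc_coupling_le_fst: "disc_coupling \<theta> p q \<Longrightarrow> \<theta> k l \<le> p k"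
  unfolding disc_coupling_def using ennreal_le_suminf[of "\<theta> k" l] by simp

lemma disc_coupling_le_snd: "disc_coupling \<theta> p q \<Longrightarrow> \<theta> k l \<le> q l"
  unfolding disc_coupling_def using ennreal_le_suminf[of "\<lambda>k. \<theta> k l" k] by simp

lemma suminf_suminf_disc_coupling: "disc_coupling \<theta> p q \<Longrightarrow> (\<Sum>k. \<Sum>l. \<theta> k l) = (\<Sum>k. p k)"
  unfolding disc_coupling_def by simp

lemma disc_cost_mono: "(\<And>k l. \<theta> k l \<le> \<theta>' k l) \<Longrightarrow> disc_cost D \<theta> \<le> disc_cost D \<theta>'"
  unfolding disc_cost_def by (intro suminf_le allI mult_right_mono) auto

lemma disc_cost_mono_cost: "(\<And>k l. D k l \<le> D' k l) \<Longrightarrow> disc_cost D \<theta> \<le> disc_cost D' \<theta>"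
  unfolding disc_cost_def by (intro suminf_le allI mult_left_mono ennreal_leI) auto

lemma disc_cost_le_bound:
  assumes "disc_coupling \<theta> p q" "(\<Sum>k. p k) = 1" "\<And>k l. D k l \<le> M"
  shows "disc_cost D \<theta> \<le> ennreal M"
proof -
  have "disc_cost D \<theta> \<le> (\<Sum>k. \<Sum>l. \<theta> k l * ennreal M)"
    unfolding disc_cost_def by (intro suminf_le allI mult_left_mono ennreal_leI assms(3)) auto
  also have "\<dots> = ennreal M"
    using suminf_suminf_disc_coupling[OF assms(1)] assms(2) by simp
  finally show ?thesis .
qed

lemma disc_coupling_nn_integral:
  assumes "\<And>x. x \<in> space N \<Longrightarrow> disc_coupling (\<theta> x) (p x) (q x)"
    and [measurable]: "\<And>k l. (\<lambda>x. \<theta> x k l) \<in> borel_measurable N"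
  shows "disc_coupling (\<lambda>k l. \<integral>\<^sup>+ x. \<theta> x k l \<partial>N) (\<lambda>k. \<integral>\<^sup>+ x. p x k \<partial>N) (\<lambda>l. \<integral>\<^sup>+ x. q x l \<partial>N)"
  unfolding disc_coupling_def
proof (intro conjI allI)
  show "(\<Sum>l. \<integral>\<^sup>+ x. \<theta> x k l \<partial>N) = (\<integral>\<^sup>+ x. p x k \<partial>N)" for k
    using assms(1) by (simp add: nn_integral_suminf[symmetric] disc_coupling_def cong: nn_integral_cong)
  show "(\<Sum>k. \<integral>\<^sup>+ x. \<theta> x k l \<partial>N) = (\<integral>\<^sup>+ x. q x l \<partial>N)" for l
    using assms(1) by (simp add: nn_integral_suminf[symmetric] disc_coupling_def cong: nn_integral_cong)
qed

lemma disc_cost_nn_integral: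
  assumes [measurable]: "\<And>k l. (\<lambda>x. \<theta> x k l) \<in> borel_measurable N"
  shows "disc_cost D (\<lambda>k l. \<integral>\<^sup>+ x. \<theta> x k l \<partial>N) = (\<integral>\<^sup>+ x. disc_cost D (\<theta> x) \<partial>N)"
  unfolding disc_cost_def by (simp add: nn_integral_multc[symmetric] nn_integral_suminf)

context cell_partition
begin

lemma disc_coupling_cell_masses:
  assumes R: "R \<in> couplings P Q"
  shows "disc_coupling (\<lambda>k l. emeasure R (cell c e k \<times> cell c e l))
           (\<lambda>k. emeasure P (cell c e k)) (\<lambda>l. emeasure Q (cell c e l))"
proof -
  have sR: "sets R = sets borel" by (rule couplingsD(2)[OF R])
  have "(\<Sum>l. emeasure R (cell c e k \<times> cell c e l)) = emeasure R (\<Union>l. cell c e k \<times> cell c e l)" for k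
    using sR disjoint_family_cell[of c e]
    by (intro suminf_emeasure) (auto simp: disjoint_family_on_def borel_prod[symmetric])
  moreover have "(\<Union>l. cell c e k \<times> cell c e l) = cell c e k \<times> UNIV" for k
    using ex_cell by blast
  moreover have "(\<Sum>k. emeasure R (cell c e k \<times> cell c e l)) = emeasure R (\<Union>k. cell c e k \<times> cell c e l)" for l
    using sR disjoint_family_cell[of c e]
    by (intro suminf_emeasure) (auto simp: disjoint_family_on_def borel_prod[symmetric])
  moreover have "(\<Union>k. cell c e k \<times> cell c e l) = UNIV \<times> cell c e l" for l
    using ex_cell by blast
  ultimately show ?thesis
    unfolding disc_coupling_def
    using emeasure_coupling_Times_UNIV[OF R] emeasure_coupling_UNIV_Times[OF R] by simp
qed

lemma disc_cost_cell_masses_le: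
  assumes R: "R \<in> couplings P Q"
  shows "disc_cost (\<lambda>k l. dist (c k) (c l)) (\<lambda>k l. emeasure R (cell c e k \<times> cell c e l))
           \<le> (\<integral>\<^sup>+ xy. ennreal (dist (fst xy) (snd xy)) \<partial>R) + ennreal (2 * e)"
proof -
  note Rc = couplingsD[OF R]
  interpret prob_space R by (rule Rc(1))
  have sR: "sets R = sets (borel \<Otimes>\<^sub>M borel)" using Rc(2) borel_prod by metis
  have [measurable]: "cell c e k \<times> cell c e l \<in> sets R" for k l unfolding sR by simp
  have pointwise: "(\<Sum>k. \<Sum>l. indicator (cell c e k \<times> cell c e l) xy * ennreal (dist (c k) (c l)))
      \<le> ennreal (dist (fst xy) (snd xy)) + ennreal (2 * e)" for xy :: "'w \<times> 'w"
  proof -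
    obtain x y k l where xy: "xy = (x, y)" "x \<in> cell c e k" "y \<in> cell c e l"
      using ex_cell by (metis prod.exhaust)
    then show ?thesis
      using centre_dist_le[OF xy(2,3)] e_pos
      by (simp add: suminf_suminf_indicator_cell ennreal_plus[symmetric] del: ennreal_plus)
  qed
  have "disc_cost (\<lambda>k l. dist (c k) (c l)) (\<lambda>k l. emeasure R (cell c e k \<times> cell c e l))
      = (\<integral>\<^sup>+ xy. (\<Sum>k. \<Sum>l. indicator (cell c e k \<times> cell c e l) xy * ennreal (dist (c k) (c l))) \<partial>R)"
    unfolding disc_cost_def
    by (simp add: nn_integral_suminf nn_integral_multc)
  also have "\<dots> \<le> (\<integral>\<^sup>+ xy. ennreal (dist (fst xy) (snd xy)) + ennreal (2 * e) \<partial>R)"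
    by (intro nn_integral_mono pointwise)
  also have "\<dots> = (\<integral>\<^sup>+ xy. ennreal (dist (fst xy) (snd xy)) \<partial>R) + ennreal (2 * e)"
    by (subst nn_integral_add) (auto simp: emeasure_space_1 measurable_cong_sets[OF sR refl])
  finally show ?thesis .
qed

(* Within each product cell, the mass \<theta> k l is distributed like the normalised
   restriction of P \<Otimes>\<^sub>M Q. *)
definition glued_coupling :: "'w measure \<Rightarrow> 'w measure \<Rightarrow> (nat \<Rightarrow> nat \<Rightarrow> ennreal) \<Rightarrow> ('w \<times> 'w) measure"
  where "glued_coupling P Q \<theta> = density (P \<Otimes>\<^sub>M Q) (\<lambda>xy. \<Sum>k. \<Sum>l.
     \<theta> k l * inverse (emeasure P (cell c e k)) * inverse (emeasure Q (cell c e l))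
       * indicator (cell c e k \<times> cell c e l) xy)"

context
  fixes P Q :: "'w measure" and \<theta> :: "nat \<Rightarrow> nat \<Rightarrow> ennreal"
  assumes P: "prob_space P" "sets P = sets borel"
    and Q: "prob_space Q" "sets Q = sets borel"
    and \<theta>: "disc_coupling \<theta> (\<lambda>k. emeasure P (cell c e k)) (\<lambda>l. emeasure Q (cell c e l))"
begin

lemma emeasure_marginals_finite: "emeasure P A \<noteq> \<top>" "emeasure Q A \<noteq> \<top>"
  using finite_measure.emeasure_finite prob_space.axioms(1) P(1) Q(1) by blast+

lemma sets_pair_measure_borel: "sets (P \<Otimes>\<^sub>M Q) = sets borel"
  using sets_pair_measure_cong[OF P(2) Q(2)] borel_prod by metis

lemma nn_integral_glued_coupling:
  assumes [measurable]: "f \<in> borel_measurable (P \<Otimes>\<^sub>M Q)"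
  shows "(\<integral>\<^sup>+ xy. f xy \<partial>glued_coupling P Q \<theta>) = (\<Sum>k. \<Sum>l.
     \<theta> k l * inverse (emeasure P (cell c e k)) * inverse (emeasure Q (cell c e l))
       * (\<integral>\<^sup>+ xy. indicator (cell c e k \<times> cell c e l) xy * f xy \<partial>(P \<Otimes>\<^sub>M Q)))"
proof -
  have [measurable]: "cell c e k \<in> sets P" "cell c e k \<in> sets Q" for k
    using P(2) Q(2) by auto
  let ?w = "\<lambda>k l. \<theta> k l * inverse (emeasure P (cell c e k)) * inverse (emeasure Q (cell c e l))"
  have "(\<integral>\<^sup>+ xy. f xy \<partial>glued_coupling P Q \<theta>)
      = (\<integral>\<^sup>+ xy. (\<Sum>k. \<Sum>l. ?w k l * (indicator (cell c e k \<times> cell c e l) xy * f xy)) \<partial>(P \<Otimes>\<^sub>M Q))"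
    unfolding glued_coupling_def by (subst nn_integral_density) (simp_all add: mult.assoc[symmetric])
  also have "\<dots> = (\<Sum>k. \<Sum>l. \<integral>\<^sup>+ xy. ?w k l * (indicator (cell c e k \<times> cell c e l) xy * f xy) \<partial>(P \<Otimes>\<^sub>M Q))"
    by (subst nn_integral_suminf, measurable, intro suminf_cong nn_integral_suminf, measurable)
  also have "\<dots> = (\<Sum>k. \<Sum>l. ?w k l * (\<integral>\<^sup>+ xy. indicator (cell c e k \<times> cell c e l) xy * f xy \<partial>(P \<Otimes>\<^sub>M Q)))"
    by (intro suminf_cong nn_integral_cmult) measurable
  finally show ?thesis .
qed

lemma emeasure_glued_coupling_Times:
  assumes A: "A \<in> sets borel" and B: "B \<in> sets borel"
  shows "emeasure (glued_coupling P Q \<theta>) (A \<times> B) = (\<Sum>k. \<Sum>l.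
     \<theta> k l * inverse (emeasure P (cell c e k)) * inverse (emeasure Q (cell c e l))
       * (emeasure P (A \<inter> cell c e k) * emeasure Q (B \<inter> cell c e l)))"
proof -
  interpret Q: prob_space Q by (rule Q(1))
  have [measurable]: "A \<times> B \<in> sets (P \<Otimes>\<^sub>M Q)" "A \<inter> cell c e k \<in> sets P" "B \<inter> cell c e k \<in> sets Q" for k
    using A B P(2) Q(2) by auto
  have "indicator (cell c e k \<times> cell c e l) xy * indicator (A \<times> B) xy
      = (indicator ((A \<inter> cell c e k) \<times> (B \<inter> cell c e l)) xy :: ennreal)" for k l xy
    by (auto simp: indicator_def)
  moreover have "emeasure (glued_coupling P Q \<theta>) (A \<times> B) = (\<integral>\<^sup>+ xy. indicator (A \<times> B) xy \<partial>glued_coupling P Q \<theta>)"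
    by (simp add: glued_coupling_def)
  moreover have "emeasure (P \<Otimes>\<^sub>M Q) ((A \<inter> cell c e k) \<times> (B \<inter> cell c e l))
      = emeasure P (A \<inter> cell c e k) * emeasure Q (B \<inter> cell c e l)" for k l
    by (rule Q.emeasure_pair_measure_Times) measurable
  ultimately show ?thesis by (simp add: nn_integral_glued_coupling)
qed

lemma emeasure_glued_coupling_Times_UNIV:
  assumes A: "A \<in> sets borel"
  shows "emeasure (glued_coupling P Q \<theta>) (A \<times> UNIV) = emeasure P A"
proof -
  let ?p = "\<lambda>k. emeasure P (cell c e k)" and ?q = "\<lambda>l. emeasure Q (cell c e l)"
  have q_cancel: "\<theta> k l * inverse (?q l) * ?q l = \<theta> k l" for k l
    using disc_coupling_le_snd[OF \<theta>] emeasure_marginals_finite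
    by (intro ennreal_mult_inverse_cancel) auto
  have p_cancel: "emeasure P (A \<inter> cell c e k) * inverse (?p k) * ?p k = emeasure P (A \<inter> cell c e k)" for k
    using A P emeasure_marginals_finite
    by (intro ennreal_mult_inverse_cancel emeasure_mono) auto
  have "emeasure (glued_coupling P Q \<theta>) (A \<times> UNIV)
      = (\<Sum>k. \<Sum>l. emeasure P (A \<inter> cell c e k) * inverse (?p k) * (\<theta> k l * inverse (?q l) * ?q l))"
    using A by (simp add: emeasure_glued_coupling_Times ac_simps)
  also have "\<dots> = (\<Sum>k. emeasure P (A \<inter> cell c e k) * inverse (?p k) * ?p k)"
    using \<theta> by (simp only: q_cancel ennreal_suminf_cmult disc_coupling_def)
  also have "\<dots> = emeasure P A"
    by (simp only: p_cancel suminf_emeasure_Int_cell[OF P(2) A])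
  finally show ?thesis .
qed

lemma emeasure_glued_coupling_UNIV_Times:
  assumes B: "B \<in> sets borel"
  shows "emeasure (glued_coupling P Q \<theta>) (UNIV \<times> B) = emeasure Q B"
proof -
  let ?p = "\<lambda>k. emeasure P (cell c e k)" and ?q = "\<lambda>l. emeasure Q (cell c e l)"
  have p_cancel: "\<theta> k l * inverse (?p k) * ?p k = \<theta> k l" for k l
    using disc_coupling_le_fst[OF \<theta>] emeasure_marginals_finite
    by (intro ennreal_mult_inverse_cancel) auto
  have q_cancel: "emeasure Q (B \<inter> cell c e l) * inverse (?q l) * ?q l = emeasure Q (B \<inter> cell c e l)" for l
    using B Q emeasure_marginals_finite
    by (intro ennreal_mult_inverse_cancel emeasure_mono) auto
  have "emeasure (glued_coupling P Q \<theta>) (UNIV \<times> B)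
      = (\<Sum>l. \<Sum>k. emeasure Q (B \<inter> cell c e l) * inverse (?q l) * (\<theta> k l * inverse (?p k) * ?p k))"
    using B by (subst ennreal_suminf_swap) (simp add: emeasure_glued_coupling_Times ac_simps)
  also have "\<dots> = (\<Sum>l. emeasure Q (B \<inter> cell c e l) * inverse (?q l) * ?q l)"
    using \<theta> by (simp only: p_cancel ennreal_suminf_cmult disc_coupling_def)
  also have "\<dots> = emeasure Q B"
    by (simp only: q_cancel suminf_emeasure_Int_cell[OF Q(2) B])
  finally show ?thesis .
qed

lemma glued_coupling_in_couplings: "glued_coupling P Q \<theta> \<in> couplings P Q"
proof (rule couplingsI)
  have sets: "sets (glued_coupling P Q \<theta>) = sets borel"
    by (simp add: glued_coupling_def sets_pair_measure_borel)
  then show "sets (glued_coupling P Q \<theta>) = sets borel" .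
  show "prob_space (glued_coupling P Q \<theta>)"
    using emeasure_glued_coupling_Times_UNIV[of UNIV] space_eq_UNIV_if_sets_borel[OF sets]
      prob_space.emeasure_space_1[OF P(1)] space_eq_UNIV_if_sets_borel[OF P(2)]
    by (intro prob_spaceI) simp
qed (use emeasure_glued_coupling_Times_UNIV emeasure_glued_coupling_UNIV_Times P Q in auto)

lemma wasserstein1_le_disc_cost:
  "wasserstein1 P Q \<le> disc_cost (\<lambda>k l. dist (c k) (c l)) \<theta> + ennreal (2 * e)"
proof -
  interpret Q: prob_space Q by (rule Q(1))
  let ?p = "\<lambda>k. emeasure P (cell c e k)" and ?q = "\<lambda>l. emeasure Q (cell c e l)"
  let ?D = "\<lambda>k l. ennreal (dist (c k) (c l) + 2 * e)"
  have [measurable]: "cell c e k \<in> sets P" "cell c e k \<in> sets Q" for k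
    using P(2) Q(2) by auto
  have [measurable]: "fst \<in> P \<Otimes>\<^sub>M Q \<rightarrow>\<^sub>M borel" "snd \<in> P \<Otimes>\<^sub>M Q \<rightarrow>\<^sub>M borel"
    using measurable_fst[of P Q] measurable_snd[of P Q]
      measurable_cong_sets[OF refl P(2)] measurable_cong_sets[OF refl Q(2)] by blast+
  have dist_meas: "(\<lambda>xy. ennreal (dist (fst xy) (snd xy))) \<in> borel_measurable (P \<Otimes>\<^sub>M Q)"
    by measurable
  have cell_cost: "\<theta> k l * inverse (?p k) * inverse (?q l)
        * (\<integral>\<^sup>+ xy. indicator (cell c e k \<times> cell c e l) xy * ennreal (dist (fst xy) (snd xy)) \<partial>(P \<Otimes>\<^sub>M Q))
      \<le> \<theta> k l * ?D k l" for k l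
  proof -
    have "(\<integral>\<^sup>+ xy. indicator (cell c e k \<times> cell c e l) xy * ennreal (dist (fst xy) (snd xy)) \<partial>(P \<Otimes>\<^sub>M Q))
        \<le> (\<integral>\<^sup>+ xy. ?D k l * indicator (cell c e k \<times> cell c e l) xy \<partial>(P \<Otimes>\<^sub>M Q))"
      by (intro nn_integral_mono) (auto simp: indicator_def intro!: ennreal_leI dist_le_centre_dist)
    also have "\<dots> = ?D k l * (?p k * ?q l)"
      by (simp add: nn_integral_cmult_indicator Q.emeasure_pair_measure_Times)
    finally have "\<theta> k l * inverse (?p k) * inverse (?q l)
        * (\<integral>\<^sup>+ xy. indicator (cell c e k \<times> cell c e l) xy * ennreal (dist (fst xy) (snd xy)) \<partial>(P \<Otimes>\<^sub>M Q))
      \<le> \<theta> k l * inverse (?p k) * inverse (?q l) * (?D k l * (?p k * ?q l))"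
      by (rule mult_left_mono) simp
    also have "\<dots> = (\<theta> k l * inverse (?p k) * ?p k) * inverse (?q l) * ?q l * ?D k l"
      by (simp add: ac_simps)
    also have "\<dots> = \<theta> k l * ?D k l"
      using ennreal_mult_inverse_cancel[OF disc_coupling_le_fst[OF \<theta>] emeasure_marginals_finite(1)]
        ennreal_mult_inverse_cancel[OF disc_coupling_le_snd[OF \<theta>] emeasure_marginals_finite(2)]
      by simp
    finally show ?thesis .
  qed
  have "wasserstein1 P Q \<le> (\<integral>\<^sup>+ xy. ennreal (dist (fst xy) (snd xy)) \<partial>glued_coupling P Q \<theta>)"
    unfolding wasserstein1_def by (rule INF_lower[OF glued_coupling_in_couplings])
  also have "\<dots> \<le> (\<Sum>k. \<Sum>l. \<theta> k l * ?D k l)"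
    unfolding nn_integral_glued_coupling[OF dist_meas] by (intro suminf_le allI cell_cost) auto
  also have "\<dots> = (\<Sum>k. \<Sum>l. \<theta> k l * ennreal (dist (c k) (c l)) + \<theta> k l * ennreal (2 * e))"
    using e_pos by (intro suminf_cong) (simp add: ennreal_plus distrib_left)
  also have "\<dots> = disc_cost (\<lambda>k l. dist (c k) (c l)) \<theta> + (\<Sum>k. \<Sum>l. \<theta> k l) * ennreal (2 * e)"
    unfolding disc_cost_def by (simp add: suminf_add[symmetric])
  also have "(\<Sum>k. \<Sum>l. \<theta> k l) = 1"
    using suminf_suminf_disc_coupling[OF \<theta>] suminf_emeasure_cell[OF P] by simp
  finally show ?thesis by simp
qed

end

end

section \<open>A countable family of discrete couplings\<close>

(* A code (N, xs) stands for the N \<times> N matrix with row-major rational entries xs;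
   the codes form a countable type. *)
definition rat_matrix :: "nat \<times> rat list \<Rightarrow> nat \<Rightarrow> nat \<Rightarrow> ennreal" where
  "rat_matrix a k l =
     (if k < fst a \<and> l < fst a then ennreal (real_of_rat (snd a ! (k * fst a + l))) else 0)"

definition rat_matrix_row :: "nat \<times> rat list \<Rightarrow> nat \<Rightarrow> ennreal" where
  "rat_matrix_row a k = (\<Sum>l<fst a. rat_matrix a k l)"

definition rat_matrix_col :: "nat \<times> rat list \<Rightarrow> nat \<Rightarrow> ennreal" where
  "rat_matrix_col a l = (\<Sum>k<fst a. rat_matrix a k l)"

definition rat_matrix_fits :: "nat \<times> rat list \<Rightarrow> (nat \<Rightarrow> ennreal) \<Rightarrow> (nat \<Rightarrow> ennreal) \<Rightarrow> bool" where
  "rat_matrix_fits a p q \<longleftrightarrow> (\<forall>k. rat_matrix_row a k \<le> p k) \<and> (\<forall>l. rat_matrix_col a l \<le> q l)"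

(* The mass not covered by the matrix is coupled independently; if the matrix does not fit
   under the marginals, the product coupling is used instead. *)
definition completed_coupling ::
  "nat \<times> rat list \<Rightarrow> (nat \<Rightarrow> ennreal) \<Rightarrow> (nat \<Rightarrow> ennreal) \<Rightarrow> nat \<Rightarrow> nat \<Rightarrow> ennreal" where
  "completed_coupling a p q k l =
     (if rat_matrix_fits a p q
      then rat_matrix a k l + (p k - rat_matrix_row a k) * (q l - rat_matrix_col a l)
             * inverse (\<Sum>k. p k - rat_matrix_row a k)
      else p k * q l)"

lemma suminf_rat_matrix_row: "(\<Sum>l. rat_matrix a k l) = rat_matrix_row a k"
  unfolding rat_matrix_row_def by (rule suminf_finite) (auto simp: rat_matrix_def)

lemma suminf_rat_matrix_col: "(\<Sum>k. rat_matrix a k l) = rat_matrix_col a l"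
  unfolding rat_matrix_col_def by (rule suminf_finite) (auto simp: rat_matrix_def)

lemma suminf_rat_matrix_row_total:
  "(\<Sum>k. rat_matrix_row a k) = (\<Sum>k<fst a. \<Sum>l<fst a. rat_matrix a k l)"
  unfolding rat_matrix_row_def by (rule suminf_finite) (auto simp: rat_matrix_def)

lemma suminf_rat_matrix_col_total:
  "(\<Sum>l. rat_matrix_col a l) = (\<Sum>k<fst a. \<Sum>l<fst a. rat_matrix a k l)"
  unfolding rat_matrix_col_def
  by (subst suminf_finite[of "{..<fst a}"]) (auto simp: rat_matrix_def intro: sum.swap)

lemma rat_matrix_total_finite: "(\<Sum>k<fst a. \<Sum>l<fst a. rat_matrix a k l) \<noteq> \<top>"
  by (simp add: rat_matrix_def)

lemma suminf_diff_plus_ennreal: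
  fixes f g :: "nat \<Rightarrow> ennreal"
  assumes "\<And>k. g k \<le> f k" "(\<Sum>k. g k) = t"
  shows "(\<Sum>k. f k - g k) + t = (\<Sum>k. f k)"
proof -
  have "(\<Sum>k. f k - g k) + (\<Sum>k. g k) = (\<Sum>k. f k - g k + g k)" by (simp add: suminf_add)
  also have "\<dots> = (\<Sum>k. f k)" using assms(1) by (simp add: diff_add_cancel_ennreal)
  finally show ?thesis using assms(2) by simp
qed

lemma residual_masses:
  assumes fits: "rat_matrix_fits a p q" and p1: "(\<Sum>k. p k) = 1" and q1: "(\<Sum>l. q l) = 1"
  shows "(\<Sum>k. p k - rat_matrix_row a k) + (\<Sum>k<fst a. \<Sum>l<fst a. rat_matrix a k l) = 1"
    and "(\<Sum>l. q l - rat_matrix_col a l) = (\<Sum>k. p k - rat_matrix_row a k)"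
    and "(\<Sum>k. p k - rat_matrix_row a k) \<noteq> \<top>"
proof -
  have le: "rat_matrix_row a k \<le> p k" "rat_matrix_col a k \<le> q k" for k
    using fits unfolding rat_matrix_fits_def by auto
  show p: "(\<Sum>k. p k - rat_matrix_row a k) + (\<Sum>k<fst a. \<Sum>l<fst a. rat_matrix a k l) = 1"
    using suminf_diff_plus_ennreal[OF le(1) suminf_rat_matrix_row_total] p1 by simp
  have "(\<Sum>l. q l - rat_matrix_col a l) + (\<Sum>k<fst a. \<Sum>l<fst a. rat_matrix a k l) = 1"
    using suminf_diff_plus_ennreal[OF le(2) suminf_rat_matrix_col_total] q1 by simp
  with p show "(\<Sum>l. q l - rat_matrix_col a l) = (\<Sum>k. p k - rat_matrix_row a k)"
    using rat_matrix_total_finite by (metis ennreal_add_diff_cancel_right)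
  show "(\<Sum>k. p k - rat_matrix_row a k) \<noteq> \<top>"
    using p by (metis ennreal_add_eq_top ennreal_one_neq_top)
qed

lemma disc_coupling_completed_coupling:
  assumes p1: "(\<Sum>k. p k) = 1" and q1: "(\<Sum>l. q l) = 1"
  shows "disc_coupling (completed_coupling a p q) p q"
proof (cases "rat_matrix_fits a p q")
  case False
  then show ?thesis
    unfolding disc_coupling_def completed_coupling_def using p1 q1 by simp
next
  case fits: True
  define r where "r k = p k - rat_matrix_row a k" for k
  define s where "s l = q l - rat_matrix_col a l" for l
  define S where "S = (\<Sum>k. r k)"
  note res = residual_masses[OF fits p1 q1, folded r_def s_def S_def]
  have le: "rat_matrix_row a k \<le> p k" "rat_matrix_col a k \<le> q k" for k
    using fits unfolding rat_matrix_fits_def by auto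
  have \<theta>: "completed_coupling a p q k l = rat_matrix a k l + r k * s l * inverse S" for k l
    unfolding completed_coupling_def r_def s_def S_def using fits by simp
  have r_cancel: "r k * inverse S * S = r k" for k
    by (rule ennreal_mult_inverse_cancel[OF _ res(3)]) (simp only: S_def ennreal_le_suminf)
  have s_cancel: "s l * inverse S * S = s l" for l
    by (rule ennreal_mult_inverse_cancel[OF _ res(3)]) (simp only: res(2)[symmetric] ennreal_le_suminf)
  have "(\<Sum>l. completed_coupling a p q k l) = rat_matrix_row a k + r k * inverse S * S" for k
    unfolding \<theta> res(2)[symmetric]
    by (simp add: suminf_add[symmetric] suminf_rat_matrix_row ac_simps del: suminf_add)
  moreover have "rat_matrix_row a k + r k = p k" for k
    unfolding r_def using le(1)[of k] by (simp add: add.commute diff_add_cancel_ennreal)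
  moreover have "(\<Sum>k. completed_coupling a p q k l) = rat_matrix_col a l + s l * inverse S * S" for l
    unfolding \<theta> S_def
    by (simp add: suminf_add[symmetric] suminf_rat_matrix_col ac_simps del: suminf_add)
  moreover have "rat_matrix_col a l + s l = q l" for l
    unfolding s_def using le(2)[of l] by (simp add: add.commute diff_add_cancel_ennreal)
  ultimately show ?thesis unfolding disc_coupling_def by (simp add: r_cancel s_cancel)
qed

lemma disc_cost_completed_coupling_le:
  assumes fits: "rat_matrix_fits a p q" and p1: "(\<Sum>k. p k) = 1" and q1: "(\<Sum>l. q l) = 1"
    and D: "\<And>k l. D k l \<le> M"
  shows "disc_cost D (completed_coupling a p q)
           \<le> disc_cost D (rat_matrix a) + (\<Sum>k. p k - rat_matrix_row a k) * ennreal M"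
proof -
  define r where "r k = p k - rat_matrix_row a k" for k
  define s where "s l = q l - rat_matrix_col a l" for l
  define S where "S = (\<Sum>k. r k)"
  note res = residual_masses[OF fits p1 q1, folded r_def s_def S_def]
  have \<theta>: "completed_coupling a p q k l = rat_matrix a k l + r k * s l * inverse S" for k l
    unfolding completed_coupling_def r_def s_def S_def using fits by simp
  have "disc_cost D (completed_coupling a p q)
      = disc_cost D (rat_matrix a) + (\<Sum>k. \<Sum>l. r k * s l * inverse S * ennreal (D k l))"
    unfolding disc_cost_def \<theta> by (simp add: distrib_right suminf_add[symmetric] del: suminf_add)
  also have "(\<Sum>k. \<Sum>l. r k * s l * inverse S * ennreal (D k l)) \<le> (\<Sum>k. \<Sum>l. r k * s l * inverse S * ennreal M)"
    by (intro suminf_le allI mult_left_mono ennreal_leI D) auto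
  also have "\<dots> = S * (\<Sum>l. s l) * inverse S * ennreal M"
    unfolding S_def by (simp add: ac_simps)
  also have "\<dots> = S * ennreal M"
    unfolding res(2) using ennreal_mult_inverse_cancel[OF order_refl res(3)] by (simp add: ac_simps)
  finally show ?thesis unfolding S_def r_def by (simp add: add_left_mono)
qed

lemma rat_matrix_of_fun:
  assumes "k < N" "l < N"
  shows "rat_matrix (N, map (\<lambda>j. r (j div N) (j mod N)) [0..<N*N]) k l = ennreal (real_of_rat (r k l))"
proof -
  have "k * N + l < Suc k * N" using assms by simp
  also have "Suc k * N \<le> N * N" using assms by (intro mult_le_mono1) simp
  finally have "k * N + l < N * N" .
  moreover have "(k * N + l) div N = k" "(k * N + l) mod N = l" using assms by auto
  ultimately show ?thesis using assms unfolding rat_matrix_def by simp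
qed

lemma ex_square_sum_greater:
  fixes f :: "nat \<Rightarrow> nat \<Rightarrow> ennreal"
  assumes "x < (\<Sum>k. \<Sum>l. f k l)"
  obtains N where "x < (\<Sum>k<N. \<Sum>l<N. f k l)"
proof -
  obtain a b where "x < (\<Sum>k<a. \<Sum>l<b. f k l)"
    using assms unfolding ennreal_suminf_suminf_eq_SUP by (auto simp: less_SUP_iff)
  also have "\<dots> \<le> (\<Sum>k<a. \<Sum>l<max a b. f k l)" by (intro sum_mono sum_mono2) auto
  also have "\<dots> \<le> (\<Sum>k<max a b. \<Sum>l<max a b. f k l)" by (intro sum_mono2) auto
  finally show ?thesis by (rule that)
qed

lemma ex_rat_matrix_approx:
  assumes \<theta>: "disc_coupling \<theta> p q" and p1: "(\<Sum>k. p k) = 1" and d: "0 < d"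
  obtains a where "\<And>k l. rat_matrix a k l \<le> \<theta> k l"
    and "1 - d < (\<Sum>k<fst a. \<Sum>l<fst a. enn2real (rat_matrix a k l))"
proof -
  define t where "t k l = enn2real (\<theta> k l)" for k l
  have \<theta>_t: "\<theta> k l = ennreal (t k l)" for k l
    using disc_coupling_le_fst[OF \<theta>, of k l] ennreal_le_suminf[of p k] p1
    unfolding t_def by (simp add: order_le_less_trans[OF _ ennreal_one_less_top])
  have t_nonneg: "0 \<le> t k l" for k l unfolding t_def by simp
  have "ennreal (1 - d/2) < 1"
  proof (cases "1 - d/2 \<le> 0")
    case True then show ?thesis by (simp add: ennreal_eq_0_iff)
  next
    case False then show ?thesis using d ennreal_less_iff[of "1 - d/2" 1] by simp
  qed
  then obtain N where "ennreal (1 - d/2) < (\<Sum>k<N. \<Sum>l<N. \<theta> k l)"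
    using suminf_suminf_disc_coupling[OF \<theta>] p1 ex_square_sum_greater[of "ennreal (1 - d/2)" \<theta>]
    by auto
  also have "(\<Sum>k<N. \<Sum>l<N. \<theta> k l) = ennreal (\<Sum>k<N. \<Sum>l<N. t k l)"
    unfolding \<theta>_t using t_nonneg by (simp add: sum_nonneg)
  finally have t_sum: "1 - d/2 < (\<Sum>k<N. \<Sum>l<N. t k l)"
  proof (cases "1 - d/2 < 0")
    case True
    have "0 \<le> (\<Sum>k<N. \<Sum>l<N. t k l)" using t_nonneg by (simp add: sum_nonneg)
    then show ?thesis using True by linarith
  qed (simp add: ennreal_less_iff)
  define K :: nat where "K = nat \<lceil>2 * real (N*N) / d\<rceil> + 1"
  have K_pos: "0 < real K" unfolding K_def by simp
  have grid: "real (N*N) / real K \<le> d/2"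
  proof -
    have "2 * real (N*N) / d \<le> real K" unfolding K_def by linarith
    then show ?thesis using K_pos d by (simp add: field_simps)
  qed
  define r where "r k l = (of_int \<lfloor>t k l * real K\<rfloor> / of_nat K :: rat)" for k l
  have r: "real_of_rat (r k l) = of_int \<lfloor>t k l * real K\<rfloor> / real K" for k l
    unfolding r_def by (simp add: of_rat_divide)
  have r_le: "real_of_rat (r k l) \<le> t k l" for k l
    unfolding r using K_pos by (simp add: divide_le_eq)
  have r_nonneg: "0 \<le> real_of_rat (r k l)" for k l
    unfolding r using t_nonneg[of k l] K_pos by simp
  have r_ge: "t k l - 1 / real K \<le> real_of_rat (r k l)" for k l
  proof -
    have "(t k l * real K - 1) / real K \<le> of_int \<lfloor>t k l * real K\<rfloor> / real K"
      using K_pos by (intro divide_right_mono) linarith+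
    then show ?thesis unfolding r using K_pos by (simp add: field_simps)
  qed
  define a where "a = (N, map (\<lambda>j. r (j div N) (j mod N)) [0..<N*N])"
  have fst_a: "fst a = N" by (simp add: a_def)
  have a: "rat_matrix a k l = (if k < N \<and> l < N then ennreal (real_of_rat (r k l)) else 0)" for k l
    using rat_matrix_of_fun[of k N l r] unfolding a_def by (auto simp: rat_matrix_def)
  show ?thesis
  proof
    show "rat_matrix a k l \<le> \<theta> k l" for k l using a \<theta>_t r_le by (auto intro: ennreal_leI)
    have "(\<Sum>k<N. \<Sum>l<N. t k l) - real (N*N) / real K = (\<Sum>k<N. \<Sum>l<N. t k l - 1 / real K)"
      by (simp add: sum_subtractf)
    also have "\<dots> \<le> (\<Sum>k<N. \<Sum>l<N. real_of_rat (r k l))" by (intro sum_mono r_ge)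
    also have "\<dots> = (\<Sum>k<fst a. \<Sum>l<fst a. enn2real (rat_matrix a k l))"
      using r_nonneg by (simp add: a fst_a)
    finally show "1 - d < (\<Sum>k<fst a. \<Sum>l<fst a. enn2real (rat_matrix a k l))"
      using t_sum grid by linarith
  qed
qed

lemma rat_matrix_fits_if_le:
  assumes below: "\<And>k l. rat_matrix a k l \<le> \<theta> k l" and \<theta>: "disc_coupling \<theta> p q"
  shows "rat_matrix_fits a p q"
  unfolding rat_matrix_fits_def rat_matrix_row_def rat_matrix_col_def
proof (intro conjI allI)
  fix k
  have "(\<Sum>l<fst a. rat_matrix a k l) \<le> (\<Sum>l<fst a. \<theta> k l)" by (intro sum_mono below)
  also have "\<dots> \<le> (\<Sum>l. \<theta> k l)" by (intro sum_le_suminf summableI) auto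
  finally show "(\<Sum>l<fst a. rat_matrix a k l) \<le> p k" using \<theta> unfolding disc_coupling_def by simp
next
  fix l
  have "(\<Sum>k<fst a. rat_matrix a k l) \<le> (\<Sum>k<fst a. \<theta> k l)" by (intro sum_mono below)
  also have "\<dots> \<le> (\<Sum>k. \<theta> k l)" by (intro sum_le_suminf summableI) auto
  finally show "(\<Sum>k<fst a. rat_matrix a k l) \<le> q l" using \<theta> unfolding disc_coupling_def by simp
qed

lemma residual_mass_le:
  assumes fits: "rat_matrix_fits a p q" and p1: "(\<Sum>k. p k) = 1" and q1: "(\<Sum>l. q l) = 1"
    and total: "1 - d < (\<Sum>k<fst a. \<Sum>l<fst a. enn2real (rat_matrix a k l))"
  shows "(\<Sum>k. p k - rat_matrix_row a k) \<le> ennreal d"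
proof -
  define S where "S = (\<Sum>k. p k - rat_matrix_row a k)"
  define T where "T = (\<Sum>k<fst a. \<Sum>l<fst a. enn2real (rat_matrix a k l))"
  have T_nonneg: "0 \<le> T" unfolding T_def by (simp add: sum_nonneg)
  have "(\<Sum>k<fst a. \<Sum>l<fst a. rat_matrix a k l)
      = (\<Sum>k<fst a. \<Sum>l<fst a. ennreal (enn2real (rat_matrix a k l)))"
    by (simp add: rat_matrix_def)
  also have "\<dots> = ennreal T" unfolding T_def by (simp add: sum_nonneg)
  finally have S_T: "S + ennreal T = 1"
    using residual_masses(1)[OF fits p1 q1] unfolding S_def by simp
  obtain s where s: "S = ennreal s" "0 \<le> s"
    using residual_masses(3)[OF fits p1 q1] unfolding S_def[symmetric] by (cases S) auto
  have "ennreal (s + T) = 1" using S_T s T_nonneg by (subst ennreal_plus) auto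
  then have "s + T = 1" by (simp only: ennreal_eq_1)
  then show ?thesis using total s unfolding S_def[symmetric] T_def by (simp add: ennreal_leI)
qed

lemma completed_coupling_dense:
  assumes \<theta>: "disc_coupling \<theta> p q" and p1: "(\<Sum>k. p k) = 1" and q1: "(\<Sum>l. q l) = 1"
    and \<delta>: "0 < \<delta>" and M: "0 \<le> M"
  shows "\<exists>a. disc_cost (\<lambda>k l. min (D k l) M) (completed_coupling a p q)
             \<le> disc_cost (\<lambda>k l. min (D k l) M) \<theta> + ennreal \<delta>"
proof -
  define d where "d = \<delta> / (M + 1)"
  have d: "0 < d" unfolding d_def using \<delta> M by simp
  have dM: "d * M \<le> \<delta>"
  proof -
    have "d * M = \<delta> * (M / (M + 1))" unfolding d_def by simp
    also have "\<dots> \<le> \<delta>" using \<delta> M by (intro mult_left_le) auto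
    finally show ?thesis .
  qed
  obtain a where below: "\<And>k l. rat_matrix a k l \<le> \<theta> k l"
    and total: "1 - d < (\<Sum>k<fst a. \<Sum>l<fst a. enn2real (rat_matrix a k l))"
    using ex_rat_matrix_approx[OF \<theta> p1 d] by blast
  have fits: "rat_matrix_fits a p q" by (rule rat_matrix_fits_if_le[OF below \<theta>])
  define S where "S = (\<Sum>k. p k - rat_matrix_row a k)"
  have S: "S \<le> ennreal d" unfolding S_def by (rule residual_mass_le[OF fits p1 q1 total])
  have "disc_cost (\<lambda>k l. min (D k l) M) (completed_coupling a p q)
      \<le> disc_cost (\<lambda>k l. min (D k l) M) (rat_matrix a) + S * ennreal M"
    unfolding S_def by (rule disc_cost_completed_coupling_le[OF fits p1 q1]) simp
  also have "\<dots> \<le> disc_cost (\<lambda>k l. min (D k l) M) \<theta> + ennreal \<delta>"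
  proof (rule add_mono)
    show "disc_cost (\<lambda>k l. min (D k l) M) (rat_matrix a) \<le> disc_cost (\<lambda>k l. min (D k l) M) \<theta>"
      by (rule disc_cost_mono[OF below])
    have "S * ennreal M \<le> ennreal d * ennreal M" by (rule mult_right_mono[OF S]) simp
    also have "\<dots> = ennreal (d * M)" using d M by (intro ennreal_mult[symmetric]) auto
    also have "\<dots> \<le> ennreal \<delta>" using dM by (rule ennreal_leI)
    finally show "S * ennreal M \<le> ennreal \<delta>" .
  qed
  finally show ?thesis by blast
qed

section \<open>Compactness of discrete couplings\<close>

lemma ennreal_suminf_tail_less:
  fixes q :: "nat \<Rightarrow> ennreal"
  assumes fin: "(\<Sum>l. q l) \<noteq> \<top>" and e: "0 < e"
  shows "\<exists>L. (\<Sum>l. q (l + L)) < e"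
proof -
  have lim: "(\<lambda>L. (\<Sum>l<L. q l) + e) \<longlonglongrightarrow> (\<Sum>l. q l) + e"
    using summable_LIMSEQ[OF summableI, of q] by (intro tendsto_add) auto
  have "(\<Sum>l. q l) < (\<Sum>l. q l) + e"
    using fin e by (simp add: ennreal_add_left_cancel_less[of _ 0, simplified])
  from order_tendstoD(1)[OF lim this] obtain L where L: "(\<Sum>l. q l) < (\<Sum>l<L. q l) + e"
    by (auto simp: eventually_sequentially)
  have split: "(\<Sum>l<L. q l) + (\<Sum>l. q (l + L)) = (\<Sum>l. q l)"
    using suminf_offset[OF summableI, of q L] by (simp add: add.commute)
  then have "(\<Sum>l<L. q l) \<noteq> \<top>" using fin by (metis ennreal_add_eq_top)
  moreover have "(\<Sum>l<L. q l) + (\<Sum>l. q (l + L)) < (\<Sum>l<L. q l) + e" using split L by simp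
  ultimately show ?thesis using ennreal_add_left_cancel_less by blast
qed

lemma suminf_row_LIMSEQ:
  fixes \<theta> :: "nat \<Rightarrow> nat \<Rightarrow> nat \<Rightarrow> ennreal"
  assumes lim: "\<And>k l. (\<lambda>j. \<theta> j k l) \<longlonglongrightarrow> \<theta>' k l"
    and rows: "\<And>j k. (\<Sum>l. \<theta> j k l) = p k"
    and dominated: "\<And>j k l. \<theta> j k l \<le> q l" and q_fin: "(\<Sum>l. q l) \<noteq> \<top>"
  shows "(\<Sum>l. \<theta>' k l) = p k"
proof (rule antisym)
  have "(\<Sum>l<L. \<theta>' k l) \<le> p k" for L
  proof (rule LIMSEQ_le_const2)
    show "(\<lambda>j. \<Sum>l<L. \<theta> j k l) \<longlonglongrightarrow> (\<Sum>l<L. \<theta>' k l)" by (intro tendsto_sum lim)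
    show "\<exists>N. \<forall>j\<ge>N. (\<Sum>l<L. \<theta> j k l) \<le> p k"
      using rows sum_le_suminf[OF summableI, of "{..<L}" "\<theta> _ k"] by auto
  qed
  then show "(\<Sum>l. \<theta>' k l) \<le> p k" unfolding suminf_eq_SUP by (intro SUP_least) auto
next
  show "p k \<le> (\<Sum>l. \<theta>' k l)"
  proof (rule ennreal_le_epsilon)
    fix e :: real assume "0 < e"
    then obtain L where L: "(\<Sum>l. q (l + L)) < ennreal e"
      using ennreal_suminf_tail_less[OF q_fin, of "ennreal e"] by auto
    have "p k \<le> (\<Sum>l<L. \<theta>' k l) + (\<Sum>l. q (l + L))"
    proof (rule LIMSEQ_le_const)
      show "(\<lambda>j. (\<Sum>l<L. \<theta> j k l) + (\<Sum>l. q (l + L))) \<longlonglongrightarrow> (\<Sum>l<L. \<theta>' k l) + (\<Sum>l. q (l + L))"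
        by (intro tendsto_add tendsto_sum lim tendsto_const)
      have "p k \<le> (\<Sum>l<L. \<theta> j k l) + (\<Sum>l. q (l + L))" for j
      proof -
        have "p k = (\<Sum>l<L. \<theta> j k l) + (\<Sum>l. \<theta> j k (l + L))"
          using rows[of j k] suminf_offset[OF summableI, of "\<theta> j k" L] by (simp add: add.commute)
        also have "\<dots> \<le> (\<Sum>l<L. \<theta> j k l) + (\<Sum>l. q (l + L))"
          by (intro add_left_mono suminf_le allI dominated) auto
        finally show ?thesis .
      qed
      then show "\<exists>N. \<forall>j\<ge>N. p k \<le> (\<Sum>l<L. \<theta> j k l) + (\<Sum>l. q (l + L))" by blast
    qed
    also have "\<dots> \<le> (\<Sum>l. \<theta>' k l) + ennreal e"
      using L by (intro add_mono sum_le_suminf[OF summableI]) auto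
    finally show "p k \<le> (\<Sum>l. \<theta>' k l) + ennreal e" .
  qed
qed

lemma ex_subseq_convergent_ennreal_matrix:
  fixes \<theta> :: "nat \<Rightarrow> nat \<Rightarrow> nat \<Rightarrow> ennreal"
  obtains \<sigma> where "strict_mono \<sigma>" "\<And>k l. convergent (\<lambda>j. \<theta> (\<sigma> j) k l)"
proof -
  define P where "P n s \<longleftrightarrow> convergent (\<lambda>j. \<theta> (s j) (fst (prod_decode n)) (snd (prod_decode n)))"
    for n s
  have ex: "\<exists>r. strict_mono r \<and> P n (s \<circ> r)" for n and s :: "nat \<Rightarrow> nat"
  proof -
    obtain r where r: "strict_mono r"
      "monoseq (\<lambda>j. \<theta> (s (r j)) (fst (prod_decode n)) (snd (prod_decode n)))"
      using seq_monosub[of "\<lambda>j. \<theta> (s j) (fst (prod_decode n)) (snd (prod_decode n))"] by auto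
    from r(2) have "convergent (\<lambda>j. \<theta> (s (r j)) (fst (prod_decode n)) (snd (prod_decode n)))"
      unfolding monoseq_iff
    proof
      assume "incseq (\<lambda>j. \<theta> (s (r j)) (fst (prod_decode n)) (snd (prod_decode n)))"
      from LIMSEQ_SUP[OF this] show ?thesis by (rule convergentI)
    next
      assume "decseq (\<lambda>j. \<theta> (s (r j)) (fst (prod_decode n)) (snd (prod_decode n)))"
      from LIMSEQ_INF[OF this] show ?thesis by (rule convergentI)
    qed
    then show ?thesis using r(1) unfolding P_def by (auto simp: o_def)
  qed
  interpret subseqs P using ex by unfold_locales auto
  have stable: "P n (s \<circ> r)" if "strict_mono r" "P n s" for r s n
  proof -
    from that(2) obtain L where "(\<lambda>j. \<theta> (s j) (fst (prod_decode n)) (snd (prod_decode n))) \<longlonglongrightarrow> L"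
      unfolding P_def convergent_def by blast
    from LIMSEQ_subseq_LIMSEQ[OF this that(1)] show ?thesis
      unfolding P_def convergent_def by (auto simp: o_def)
  qed
  have "convergent (\<lambda>j. \<theta> (diagseq j) k l)" for k l
  proof -
    define n where "n = prod_encode (k, l)"
    have "P n (diagseq \<circ> (+) (Suc n))" by (rule diagseq_holds) (rule stable)
    then have "convergent (\<lambda>j. \<theta> (diagseq (j + Suc n)) k l)"
      unfolding P_def n_def by (simp add: o_def add.commute)
    then show ?thesis using convergent_ignore_initial_segment[of "\<lambda>j. \<theta> (diagseq j) k l" "Suc n"] by simp
  qed
  then show ?thesis by (rule that[OF subseq_diagseq])
qed

lemma disc_cost_le_if_truncated_LIMSEQ:
  fixes D :: "nat \<Rightarrow> nat \<Rightarrow> real" and T :: ennreal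
  assumes lim: "\<And>k l. (\<lambda>j. \<theta> j k l) \<longlonglongrightarrow> \<theta>' k l" and fin: "\<And>k l. \<theta>' k l \<noteq> \<top>"
    and \<sigma>: "strict_mono \<sigma>"
    and cost: "\<And>j. disc_cost (\<lambda>k l. min (D k l) (real (\<sigma> j))) (\<theta> j) \<le> T"
  shows "disc_cost D \<theta>' \<le> T"
proof -
  have "(\<Sum>k<a. \<Sum>l<b. \<theta>' k l * ennreal (D k l)) \<le> T" for a b
  proof -
    define M :: nat where "M = nat \<lceil>\<Sum>k<a. \<Sum>l<b. \<bar>D k l\<bar>\<rceil>"
    have D_le: "D k l \<le> real M" if "k < a" "l < b" for k l
    proof -
      have "\<bar>D k l\<bar> \<le> (\<Sum>l<b. \<bar>D k l\<bar>)" using that by (intro member_le_sum) auto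
      also have "\<dots> \<le> (\<Sum>k<a. \<Sum>l<b. \<bar>D k l\<bar>)"
        using that by (intro member_le_sum[where f="\<lambda>k. \<Sum>l<b. \<bar>D k l\<bar>"] sum_nonneg) auto
      also have "\<dots> \<le> real M" unfolding M_def by linarith
      finally show ?thesis by linarith
    qed
    have "(\<Sum>k<a. \<Sum>l<b. \<theta>' k l * ennreal (D k l))
        = (\<Sum>k<a. \<Sum>l<b. \<theta>' k l * ennreal (min (D k l) (real M)))"
      using D_le by (intro sum.cong refl) (simp add: min_def)
    also have "\<dots> \<le> T"
    proof (rule LIMSEQ_le_const2)
      show "(\<lambda>j. \<Sum>k<a. \<Sum>l<b. \<theta> j k l * ennreal (min (D k l) (real M)))
          \<longlonglongrightarrow> (\<Sum>k<a. \<Sum>l<b. \<theta>' k l * ennreal (min (D k l) (real M)))"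
        by (intro tendsto_sum tendsto_mult_ennreal lim tendsto_const) (auto simp: fin)
      have "(\<Sum>k<a. \<Sum>l<b. \<theta> j k l * ennreal (min (D k l) (real M))) \<le> T" if "M \<le> j" for j
      proof -
        have "real M \<le> real (\<sigma> j)" using that seq_suble[OF \<sigma>, of j] by simp
        then have "(\<Sum>k<a. \<Sum>l<b. \<theta> j k l * ennreal (min (D k l) (real M)))
            \<le> (\<Sum>k<a. \<Sum>l<b. \<theta> j k l * ennreal (min (D k l) (real (\<sigma> j))))"
          by (intro sum_mono mult_left_mono ennreal_leI) auto
        also have "\<dots> \<le> disc_cost (\<lambda>k l. min (D k l) (real (\<sigma> j))) (\<theta> j)"
          unfolding disc_cost_def by (rule ennreal_sum_lessThan_le_suminf)
        also have "\<dots> \<le> T" by (rule cost)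
        finally show ?thesis .
      qed
      then show "\<exists>N. \<forall>j\<ge>N. (\<Sum>k<a. \<Sum>l<b. \<theta> j k l * ennreal (min (D k l) (real M))) \<le> T"
        by blast
    qed
    finally show ?thesis .
  qed
  then show ?thesis
    unfolding disc_cost_def ennreal_suminf_suminf_eq_SUP by (intro SUP_least)
qed

lemma disc_coupling_limit_of_truncated:
  fixes D :: "nat \<Rightarrow> nat \<Rightarrow> real" and T :: ennreal
  assumes \<theta>: "\<And>M::nat. disc_coupling (\<theta> M) p q"
    and cost: "\<And>M::nat. disc_cost (\<lambda>k l. min (D k l) (real M)) (\<theta> M) \<le> T"
    and p1: "(\<Sum>k. p k) = 1" and q1: "(\<Sum>l. q l) = 1"
  obtains \<theta>' where "disc_coupling \<theta>' p q" "disc_cost D \<theta>' \<le> T"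
proof -
  obtain \<sigma> where \<sigma>: "strict_mono \<sigma>" "\<And>k l. convergent (\<lambda>j. \<theta> (\<sigma> j) k l)"
    using ex_subseq_convergent_ennreal_matrix by blast
  define \<theta>' where "\<theta>' k l = lim (\<lambda>j. \<theta> (\<sigma> j) k l)" for k l
  have lim: "(\<lambda>j. \<theta> (\<sigma> j) k l) \<longlonglongrightarrow> \<theta>' k l" for k l
    unfolding \<theta>'_def using \<sigma>(2) by (simp add: convergent_LIMSEQ_iff)
  have rows: "(\<Sum>l. \<theta>' k l) = p k" for k
    by (rule suminf_row_LIMSEQ[where \<theta>="\<lambda>j. \<theta> (\<sigma> j)" and q=q, OF lim])
       (use \<theta> q1 in \<open>auto simp: disc_coupling_def intro: disc_coupling_le_snd\<close>)
  have cols: "(\<Sum>k. \<theta>' k l) = q l" for l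
    by (rule suminf_row_LIMSEQ[where \<theta>="\<lambda>j k l. \<theta> (\<sigma> j) l k" and \<theta>'="\<lambda>k l. \<theta>' l k" and q=p, OF lim])
       (use \<theta> p1 in \<open>auto simp: disc_coupling_def intro: disc_coupling_le_fst\<close>)
  have "\<theta>' k l \<noteq> \<top>" for k l
  proof -
    have "\<theta>' k l \<le> p k" using ennreal_le_suminf[of "\<theta>' k" l] rows[of k] by simp
    also have "p k \<le> 1" using ennreal_le_suminf[of p k] p1 by simp
    finally show ?thesis by (auto simp: top_unique)
  qed
  then have "disc_cost D \<theta>' \<le> T"
    by (rule disc_cost_le_if_truncated_LIMSEQ[OF lim _ \<sigma>(1) cost])
  moreover have "disc_coupling \<theta>' p q" unfolding disc_coupling_def using rows cols by simp
  ultimately show ?thesis using that by blast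
qed

section \<open>Convexity of the Wasserstein distance under mixtures\<close>

(* The first \<delta>-optimal member of the countable family, so the choice is measurable in p, q. *)
definition selected_coupling ::
  "(nat \<Rightarrow> nat \<Rightarrow> real) \<Rightarrow> real \<Rightarrow> (nat \<Rightarrow> ennreal) \<Rightarrow> (nat \<Rightarrow> ennreal) \<Rightarrow> nat \<Rightarrow> nat \<Rightarrow> ennreal"
  where "selected_coupling D \<delta> p q = completed_coupling (from_nat (LEAST j.
     disc_cost D (completed_coupling (from_nat j) p q)
       \<le> (INF i. disc_cost D (completed_coupling (from_nat i) p q)) + ennreal \<delta>)) p q"

lemma measurable_selected_coupling[measurable]:
  assumes [measurable]: "\<And>k. (\<lambda>x. p x k) \<in> borel_measurable X" "\<And>l. (\<lambda>x. q x l) \<in> borel_measurable X"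
  shows "(\<lambda>x. selected_coupling D \<delta> (p x) (q x) k l) \<in> borel_measurable X"
proof -
  have [measurable]: "(\<lambda>x. completed_coupling a (p x) (q x) k l) \<in> borel_measurable X" for a k l
    unfolding completed_coupling_def rat_matrix_fits_def by measurable
  have [measurable]: "(\<lambda>x. disc_cost D (completed_coupling a (p x) (q x))) \<in> borel_measurable X" for a
    unfolding disc_cost_def by measurable
  have "(\<lambda>x. LEAST j. disc_cost D (completed_coupling (from_nat j) (p x) (q x))
      \<le> (INF i. disc_cost D (completed_coupling (from_nat i) (p x) (q x))) + ennreal \<delta>)
    \<in> X \<rightarrow>\<^sub>M count_space UNIV"
    by measurable
  then show ?thesis
    unfolding selected_coupling_def
    by (rule measurable_compose_countable[where f="\<lambda>j x. completed_coupling (from_nat j) (p x) (q x) k l",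
          rotated]) simp
qed

context
  fixes p q :: "nat \<Rightarrow> ennreal"
  assumes p1: "(\<Sum>k. p k) = 1" and q1: "(\<Sum>l. q l) = 1"
begin

lemma disc_coupling_selected_coupling: "disc_coupling (selected_coupling D \<delta> p q) p q"
  unfolding selected_coupling_def by (rule disc_coupling_completed_coupling[OF p1 q1])

lemma disc_cost_selected_coupling_le:
  fixes D :: "nat \<Rightarrow> nat \<Rightarrow> real"
  assumes \<theta>: "disc_coupling \<theta> p q" and \<delta>: "0 < \<delta>" and M: "0 \<le> M"
  shows "disc_cost (\<lambda>k l. min (D k l) M) (selected_coupling (\<lambda>k l. min (D k l) M) \<delta> p q)
           \<le> disc_cost (\<lambda>k l. min (D k l) M) \<theta> + ennreal (2 * \<delta>)"
proof -
  define c where "c j = disc_cost (\<lambda>k l. min (D k l) M) (completed_coupling (from_nat j) p q)" for j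
  define V where "V = (INF j. c j)"
  have "V \<le> c 0" unfolding V_def by (rule INF_lower) simp
  also have "c 0 \<le> ennreal M"
    unfolding c_def by (rule disc_cost_le_bound[OF disc_coupling_completed_coupling[OF p1 q1] p1]) simp
  finally have "V \<noteq> \<top>" by (auto simp: top_unique)
  then have "V < V + ennreal \<delta>" using \<delta> by (simp add: ennreal_add_left_cancel_less[of V 0, simplified])
  then have "\<exists>j. c j \<le> V + ennreal \<delta>" unfolding V_def by (auto simp: INF_less_iff intro: less_imp_le)
  then have selected: "disc_cost (\<lambda>k l. min (D k l) M) (selected_coupling (\<lambda>k l. min (D k l) M) \<delta> p q)
      \<le> V + ennreal \<delta>"
    unfolding selected_coupling_def c_def[symmetric] V_def[symmetric] by (rule LeastI_ex)
  obtain a where a: "disc_cost (\<lambda>k l. min (D k l) M) (completed_coupling a p q)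
      \<le> disc_cost (\<lambda>k l. min (D k l) M) \<theta> + ennreal \<delta>"
    using completed_coupling_dense[OF \<theta> p1 q1 \<delta> M] by blast
  have "V \<le> c (to_nat a)" unfolding V_def by (rule INF_lower) simp
  then have "V \<le> disc_cost (\<lambda>k l. min (D k l) M) \<theta> + ennreal \<delta>" using a by (simp add: c_def)
  with selected have "disc_cost (\<lambda>k l. min (D k l) M) (selected_coupling (\<lambda>k l. min (D k l) M) \<delta> p q)
      \<le> disc_cost (\<lambda>k l. min (D k l) M) \<theta> + ennreal \<delta> + ennreal \<delta>"
    by (meson add_right_mono order_trans)
  also have "\<dots> = disc_cost (\<lambda>k l. min (D k l) M) \<theta> + ennreal (2 * \<delta>)"
    using \<delta> by (simp add: add.assoc ennreal_plus[symmetric])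
  finally show ?thesis .
qed

end

context cell_partition
begin

lemma disc_cost_selected_coupling_le_wasserstein1:
  assumes P: "prob_space P" "sets P = sets borel" and Q: "prob_space Q" "sets Q = sets borel"
    and \<delta>: "0 < \<delta>"
  shows "disc_cost (\<lambda>k l. min (dist (c k) (c l)) (real M))
      (selected_coupling (\<lambda>k l. min (dist (c k) (c l)) (real M)) \<delta>
         (\<lambda>k. emeasure P (cell c e k)) (\<lambda>l. emeasure Q (cell c e l)))
    \<le> wasserstein1 P Q + ennreal (2 * e + 2 * \<delta>)"
  unfolding wasserstein1_def
proof (rule le_INF_plus_ennreal)
  fix R assume R: "R \<in> couplings P Q"
  let ?\<theta> = "\<lambda>k l. emeasure R (cell c e k \<times> cell c e l)"
  have "disc_cost (\<lambda>k l. min (dist (c k) (c l)) (real M))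
      (selected_coupling (\<lambda>k l. min (dist (c k) (c l)) (real M)) \<delta>
         (\<lambda>k. emeasure P (cell c e k)) (\<lambda>l. emeasure Q (cell c e l)))
    \<le> disc_cost (\<lambda>k l. min (dist (c k) (c l)) (real M)) ?\<theta> + ennreal (2 * \<delta>)"
    by (rule disc_cost_selected_coupling_le[OF suminf_emeasure_cell[OF P] suminf_emeasure_cell[OF Q]
          disc_coupling_cell_masses[OF R] \<delta>]) simp
  also have "disc_cost (\<lambda>k l. min (dist (c k) (c l)) (real M)) ?\<theta> \<le> disc_cost (\<lambda>k l. dist (c k) (c l)) ?\<theta>"
    by (rule disc_cost_mono_cost) simp
  also have "\<dots> \<le> (\<integral>\<^sup>+ xy. ennreal (dist (fst xy) (snd xy)) \<partial>R) + ennreal (2 * e)"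
    by (rule disc_cost_cell_masses_le[OF R])
  finally show "disc_cost (\<lambda>k l. min (dist (c k) (c l)) (real M))
      (selected_coupling (\<lambda>k l. min (dist (c k) (c l)) (real M)) \<delta>
         (\<lambda>k. emeasure P (cell c e k)) (\<lambda>l. emeasure Q (cell c e l)))
    \<le> (\<integral>\<^sup>+ xy. ennreal (dist (fst xy) (snd xy)) \<partial>R) + ennreal (2 * e + 2 * \<delta>)"
    using e_pos \<delta> by (simp add: ennreal_plus add.assoc)
qed

lemma wasserstein1_bind_le_nn_integral:
  fixes P Q :: "'x \<Rightarrow> 'w measure" and \<theta> :: "nat \<Rightarrow> 'x \<Rightarrow> nat \<Rightarrow> nat \<Rightarrow> ennreal"
  assumes P: "P \<in> X \<rightarrow>\<^sub>M prob_algebra borel" and Q: "Q \<in> X \<rightarrow>\<^sub>M prob_algebra borel"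
    and \<mu>: "\<mu> \<in> space (prob_algebra X)"
    and \<theta>: "\<And>M x. x \<in> space X \<Longrightarrow>
      disc_coupling (\<theta> M x) (\<lambda>k. emeasure (P x) (cell c e k)) (\<lambda>l. emeasure (Q x) (cell c e l))"
    and \<theta>_meas: "\<And>M k l. (\<lambda>x. \<theta> M x k l) \<in> borel_measurable X"
    and cost: "\<And>M x. x \<in> space X \<Longrightarrow> disc_cost (\<lambda>k l. min (dist (c k) (c l)) (real M)) (\<theta> M x) \<le> C x"
  shows "wasserstein1 (bind \<mu> P) (bind \<mu> Q) \<le> (\<integral>\<^sup>+ x. C x \<partial>\<mu>) + ennreal (2 * e)"
proof -
  have sets_\<mu>: "sets \<mu> = sets X" and "prob_space \<mu>" using \<mu> by (auto simp: space_prob_algebra)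
  have space_\<mu>: "space \<mu> = space X" using sets_eq_imp_space_eq[OF sets_\<mu>] .
  have \<theta>_meas_\<mu>[measurable]: "(\<lambda>x. \<theta> M x k l) \<in> borel_measurable \<mu>" for M k l
    using \<theta>_meas measurable_cong_sets[OF sets_\<mu> refl] by blast
  have bind_P: "prob_space (bind \<mu> P)" "sets (bind \<mu> P) = sets borel"
    using prob_space_bind'[OF \<mu> P] sets_bind'[OF \<mu> P] by auto
  have bind_Q: "prob_space (bind \<mu> Q)" "sets (bind \<mu> Q) = sets borel"
    using prob_space_bind'[OF \<mu> Q] sets_bind'[OF \<mu> Q] by auto
  define \<theta>\<mu> where "\<theta>\<mu> M k l = (\<integral>\<^sup>+ x. \<theta> M x k l \<partial>\<mu>)" for M k l
  have "disc_coupling (\<theta>\<mu> M) (\<lambda>k. emeasure (bind \<mu> P) (cell c e k)) (\<lambda>l. emeasure (bind \<mu> Q) (cell c e l))"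
    for M
    unfolding \<theta>\<mu>_def emeasure_bind_prob_algebra[OF \<mu> P cell_borel] emeasure_bind_prob_algebra[OF \<mu> Q cell_borel]
    by (rule disc_coupling_nn_integral) (auto simp: space_\<mu> \<theta>)
  moreover have "disc_cost (\<lambda>k l. min (dist (c k) (c l)) (real M)) (\<theta>\<mu> M) \<le> (\<integral>\<^sup>+ x. C x \<partial>\<mu>)" for M
    unfolding \<theta>\<mu>_def disc_cost_nn_integral[OF \<theta>_meas_\<mu>]
    by (intro nn_integral_mono) (simp add: space_\<mu> cost)
  ultimately obtain \<theta>' where
    "disc_coupling \<theta>' (\<lambda>k. emeasure (bind \<mu> P) (cell c e k)) (\<lambda>l. emeasure (bind \<mu> Q) (cell c e l))"
    "disc_cost (\<lambda>k l. dist (c k) (c l)) \<theta>' \<le> (\<integral>\<^sup>+ x. C x \<partial>\<mu>)"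
    using disc_coupling_limit_of_truncated suminf_emeasure_cell[OF bind_P] suminf_emeasure_cell[OF bind_Q]
    by metis
  then show ?thesis
    using wasserstein1_le_disc_cost[OF bind_P bind_Q] by (meson add_right_mono order_trans)
qed

end

(* C is a measurable stand-in for x \<mapsto> wasserstein1 (P x) (Q x), whose measurability
   in x is not established. *)
lemma wasserstein1_bind_le:
  fixes P Q :: "'x \<Rightarrow> 'w::polish_space measure"
  assumes P: "P \<in> X \<rightarrow>\<^sub>M prob_algebra borel" and Q: "Q \<in> X \<rightarrow>\<^sub>M prob_algebra borel" and \<epsilon>: "0 < \<epsilon>"
  obtains C where "C \<in> borel_measurable X"
    and "\<And>x. x \<in> space X \<Longrightarrow> C x \<le> wasserstein1 (P x) (Q x) + ennreal \<epsilon>"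
    and "\<And>\<mu>. \<mu> \<in> space (prob_algebra X) \<Longrightarrow>
           wasserstein1 (bind \<mu> P) (bind \<mu> Q) \<le> (\<integral>\<^sup>+ x. C x \<partial>\<mu>) + ennreal \<epsilon>"
proof -
  obtain c :: "nat \<Rightarrow> 'w" where c: "\<And>x e. 0 < e \<Longrightarrow> \<exists>k. dist (c k) x < e"
    using ex_dense_sequence[where 'a='w] by blast
  define e where "e = \<epsilon> / 4"
  interpret cell_partition c e
    by unfold_locales (rule c, use \<epsilon> in \<open>simp add: e_def\<close>)
  define p where "p x k = emeasure (P x) (cell c e k)" for x k
  define q where "q x l = emeasure (Q x) (cell c e l)" for x l
  define \<theta> where "\<theta> M x = selected_coupling (\<lambda>k l. min (dist (c k) (c l)) (real M)) e (p x) (q x)"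
    for M :: nat and x
  define C where "C x = (SUP M. disc_cost (\<lambda>k l. min (dist (c k) (c l)) (real M)) (\<theta> M x))" for x
  have [measurable]: "(\<lambda>x. p x k) \<in> borel_measurable X" "(\<lambda>x. q x k) \<in> borel_measurable X" for k
    unfolding p_def q_def
    using measurable_emeasure_kernel[OF measurable_prob_algebraD[OF P]]
      measurable_emeasure_kernel[OF measurable_prob_algebraD[OF Q]] by auto
  have \<theta>_meas[measurable]: "(\<lambda>x. \<theta> M x k l) \<in> borel_measurable X" for M k l
    unfolding \<theta>_def by measurable
  have e_sum: "2 * e + 2 * e = \<epsilon>" "2 * e \<le> \<epsilon>" using \<epsilon> by (auto simp: e_def)
  show ?thesis
  proof (rule that)
    show "C \<in> borel_measurable X" unfolding C_def disc_cost_def by measurable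
  next
    fix x assume x: "x \<in> space X"
    show "C x \<le> wasserstein1 (P x) (Q x) + ennreal \<epsilon>"
      unfolding C_def
    proof (rule SUP_least)
      show "disc_cost (\<lambda>k l. min (dist (c k) (c l)) (real M)) (\<theta> M x) \<le> wasserstein1 (P x) (Q x) + ennreal \<epsilon>"
        for M
        using disc_cost_selected_coupling_le_wasserstein1[OF prob_kernelD[OF P x] prob_kernelD[OF Q x] e_pos, of M]
        unfolding \<theta>_def p_def q_def e_sum(1) .
    qed
  next
    fix \<mu> assume \<mu>: "\<mu> \<in> space (prob_algebra X)"
    have "wasserstein1 (bind \<mu> P) (bind \<mu> Q) \<le> (\<integral>\<^sup>+ x. C x \<partial>\<mu>) + ennreal (2 * e)"
    proof (rule wasserstein1_bind_le_nn_integral[OF P Q \<mu> _ \<theta>_meas])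
      show "disc_coupling (\<theta> M x) (\<lambda>k. emeasure (P x) (cell c e k)) (\<lambda>l. emeasure (Q x) (cell c e l))"
        if "x \<in> space X" for M x
        unfolding \<theta>_def p_def q_def
        by (rule disc_coupling_selected_coupling)
           (use suminf_emeasure_cell prob_kernelD[OF P that] prob_kernelD[OF Q that] in auto)
      show "disc_cost (\<lambda>k l. min (dist (c k) (c l)) (real M)) (\<theta> M x) \<le> C x" for M x
        unfolding C_def by (rule SUP_upper) simp
    qed
    also have "\<dots> \<le> (\<integral>\<^sup>+ x. C x \<partial>\<mu>) + ennreal \<epsilon>"
      using e_sum by (intro add_left_mono ennreal_leI) auto
    finally show "wasserstein1 (bind \<mu> P) (bind \<mu> Q) \<le> (\<integral>\<^sup>+ x. C x \<partial>\<mu>) + ennreal \<epsilon>" .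
  qed
qed

section \<open>Resampling coordinates of a product measure\<close>

lemma measurable_merge_resample:
  assumes "J \<subseteq> I"
  shows "(\<lambda>(s, t). merge J (I - J) (t, s)) \<in> (PiM I M \<Otimes>\<^sub>M PiM J M) \<rightarrow>\<^sub>M PiM I M"
proof -
  have "(\<lambda>(s, t). (t, restrict s (I - J))) \<in> (PiM I M \<Otimes>\<^sub>M PiM J M) \<rightarrow>\<^sub>M (PiM J M \<Otimes>\<^sub>M PiM (I - J) M)"
    by measurable
  from measurable_comp[OF this measurable_merge] have m:
    "(\<lambda>x. merge J (I - J) ((\<lambda>(s, t). (t, restrict s (I - J))) x)) \<in> (PiM I M \<Otimes>\<^sub>M PiM J M) \<rightarrow>\<^sub>M PiM I M"
    using assms by (simp add: comp_def Un_absorb1)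
  have eq: "(\<lambda>x. merge J (I - J) ((\<lambda>(s, t). (t, restrict s (I - J))) x)) = (\<lambda>(s, t). merge J (I - J) (t, s))"
    by (auto simp: merge_def fun_eq_iff)
  show ?thesis using m unfolding eq .
qed

lemma measurable_fun_upd_PiM:
  assumes "i \<in> I"
  shows "(\<lambda>(z, s). s(i := z)) \<in> (M \<Otimes>\<^sub>M PiM I (\<lambda>_. M)) \<rightarrow>\<^sub>M PiM I (\<lambda>_. M)"
proof (rule measurable_PiM_single')
  fix j assume "j \<in> I"
  then have "(\<lambda>x. snd x j) \<in> (M \<Otimes>\<^sub>M PiM I (\<lambda>_. M)) \<rightarrow>\<^sub>M M" by measurable
  then show "(\<lambda>x. (case x of (z, s) \<Rightarrow> s(i := z)) j) \<in> (M \<Otimes>\<^sub>M PiM I (\<lambda>_. M)) \<rightarrow>\<^sub>M M"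
    by (cases "j = i") (simp_all add: case_prod_beta')
next
  show "(\<lambda>(z, s). s(i := z)) \<in> space (M \<Otimes>\<^sub>M PiM I (\<lambda>_. M)) \<rightarrow> (\<Pi>\<^sub>E j\<in>I. space M)"
    using assms by (auto simp: space_pair_measure space_PiM PiE_def Pi_def extensional_def)
qed

lemma measurable_fun_upd_PiM_const:
  assumes "i \<in> I" "z \<in> space M"
  shows "(\<lambda>s. s(i := z)) \<in> PiM I (\<lambda>_. M) \<rightarrow>\<^sub>M PiM I (\<lambda>_. M)"
  using measurable_compose[OF measurable_Pair1'[OF assms(2)] measurable_fun_upd_PiM[OF assms(1)]]
  by simp

context
  fixes M :: "'a measure" and I :: "'i set"
  assumes M: "prob_space M" and I: "finite I"
begin

lemma nn_integral_PiM_merge_resample: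
  assumes J: "J \<subseteq> I" and f[measurable]: "f \<in> borel_measurable (PiM I (\<lambda>_. M))"
  shows "(\<integral>\<^sup>+ s. (\<integral>\<^sup>+ t. f (merge J (I - J) (t, s)) \<partial>PiM J (\<lambda>_. M)) \<partial>PiM I (\<lambda>_. M))
       = integral\<^sup>N (PiM I (\<lambda>_. M)) f"
proof -
  interpret product_prob_space "\<lambda>_::'i. M"
    using M by (simp add: product_prob_space_def product_prob_space_axioms_def product_sigma_finite_def
        prob_space_imp_sigma_finite)
  interpret J: prob_space "PiM J (\<lambda>_. M)" by (rule prob_space_PiM) (use M in simp)
  define Jc where "Jc = I - J"
  have fin: "finite J" "finite Jc" using I J unfolding Jc_def by (auto intro: finite_subset)
  have disj: "Jc \<inter> J = {}" and IJ: "Jc \<union> J = I" using J unfolding Jc_def by auto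
  have [measurable]: "(\<lambda>(s, t). merge J Jc (t, s)) \<in> (PiM I (\<lambda>_. M) \<Otimes>\<^sub>M PiM J (\<lambda>_. M)) \<rightarrow>\<^sub>M PiM I (\<lambda>_. M)"
    unfolding Jc_def by (rule measurable_merge_resample[OF J])
  have "(\<lambda>s. \<integral>\<^sup>+ t. f (merge J Jc (t, s)) \<partial>PiM J (\<lambda>_. M)) \<in> borel_measurable (PiM I (\<lambda>_. M))"
    by (rule J.borel_measurable_nn_integral) measurable
  then have "(\<integral>\<^sup>+ s. (\<integral>\<^sup>+ t. f (merge J Jc (t, s)) \<partial>PiM J (\<lambda>_. M)) \<partial>PiM I (\<lambda>_. M))
      = (\<integral>\<^sup>+ x. (\<integral>\<^sup>+ y. (\<integral>\<^sup>+ t. f (merge J Jc (t, merge Jc J (x, y))) \<partial>PiM J (\<lambda>_. M))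
           \<partial>PiM J (\<lambda>_. M)) \<partial>PiM Jc (\<lambda>_. M))"
    using product_nn_integral_fold[OF disj fin(2) fin(1)] IJ by simp
  also have "\<dots> = (\<integral>\<^sup>+ x. (\<integral>\<^sup>+ t. f (merge Jc J (x, t)) \<partial>PiM J (\<lambda>_. M)) \<partial>PiM Jc (\<lambda>_. M))"
  proof -
    have eq: "merge J Jc (t, merge Jc J (x, y)) = merge Jc J (x, t)" for t x y :: "'i \<Rightarrow> 'a"
      using disj by (auto simp: merge_def fun_eq_iff)
    have "(\<integral>\<^sup>+ x. (\<integral>\<^sup>+ y. (\<integral>\<^sup>+ t. f (merge J Jc (t, merge Jc J (x, y))) \<partial>PiM J (\<lambda>_. M))
           \<partial>PiM J (\<lambda>_. M)) \<partial>PiM Jc (\<lambda>_. M))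
      = (\<integral>\<^sup>+ x. (\<integral>\<^sup>+ y. (\<integral>\<^sup>+ t. f (merge Jc J (x, t)) \<partial>PiM J (\<lambda>_. M))
           \<partial>PiM J (\<lambda>_. M)) \<partial>PiM Jc (\<lambda>_. M))"
      by (intro nn_integral_cong) (simp only: eq)
    then show ?thesis by (simp add: J.emeasure_space_1)
  qed
  also have "\<dots> = integral\<^sup>N (PiM I (\<lambda>_. M)) f"
    using product_nn_integral_fold[OF disj fin(2) fin(1), of f] IJ by simp
  finally show ?thesis unfolding Jc_def .
qed

lemma nn_integral_PiM_fun_upd:
  assumes i: "i \<in> I" and f[measurable]: "f \<in> borel_measurable (PiM I (\<lambda>_. M))"
  shows "(\<lambda>z. \<integral>\<^sup>+ s. f (s(i := z)) \<partial>PiM I (\<lambda>_. M)) \<in> borel_measurable M"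
    and "(\<integral>\<^sup>+ z. (\<integral>\<^sup>+ s. f (s(i := z)) \<partial>PiM I (\<lambda>_. M)) \<partial>M) = integral\<^sup>N (PiM I (\<lambda>_. M)) f"
proof -
  interpret product_prob_space "\<lambda>_::'i. M"
    using M by (simp add: product_prob_space_def product_prob_space_axioms_def product_sigma_finite_def
        prob_space_imp_sigma_finite)
  have PiI: "sigma_finite_measure (PiM I (\<lambda>_. M))"
    by (rule prob_space_imp_sigma_finite, rule prob_space_PiM) (use M in simp)
  interpret M: prob_space M by (rule M)
  interpret pair_sigma_finite M "PiM I (\<lambda>_. M)" ..
  have g: "(\<lambda>(z, s). f (s(i := z))) \<in> borel_measurable (M \<Otimes>\<^sub>M PiM I (\<lambda>_. M))"
    using measurable_comp[OF measurable_fun_upd_PiM[OF i] f] by (simp add: comp_def case_prod_beta')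
  show "(\<lambda>z. \<integral>\<^sup>+ s. f (s(i := z)) \<partial>PiM I (\<lambda>_. M)) \<in> borel_measurable M"
    using sigma_finite_measure.borel_measurable_nn_integral[OF PiI g] .
  have "(\<integral>\<^sup>+ z. (\<integral>\<^sup>+ s. f (s(i := z)) \<partial>PiM I (\<lambda>_. M)) \<partial>M)
      = (\<integral>\<^sup>+ s. (\<integral>\<^sup>+ z. f (s(i := z)) \<partial>M) \<partial>PiM I (\<lambda>_. M))"
    using Fubini'[OF g] by simp
  also have "\<dots> = (\<integral>\<^sup>+ s. (\<integral>\<^sup>+ t. f (merge {i} (I - {i}) (t, s)) \<partial>PiM {i} (\<lambda>_. M)) \<partial>PiM I (\<lambda>_. M))"
  proof (rule nn_integral_cong)
    fix s assume s: "s \<in> space (PiM I (\<lambda>_. M))"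
    have "(\<lambda>z. f (s(i := z))) \<in> borel_measurable M"
      using measurable_compose[OF measurable_Pair2'[OF s] g] by simp
    then have "(\<integral>\<^sup>+ z. f (s(i := z)) \<partial>M) = (\<integral>\<^sup>+ t. f (s(i := t i)) \<partial>PiM {i} (\<lambda>_. M))"
      using product_nn_integral_singleton[of "\<lambda>z. f (s(i := z))" i] by simp
    also have "\<dots> = (\<integral>\<^sup>+ t. f (merge {i} (I - {i}) (t, s)) \<partial>PiM {i} (\<lambda>_. M))"
    proof (rule nn_integral_cong)
      fix t
      have "s(i := t i) = merge {i} (I - {i}) (t, s)"
        using s i by (auto simp: merge_def fun_eq_iff space_PiM PiE_def extensional_def)
      then show "f (s(i := t i)) = f (merge {i} (I - {i}) (t, s))" by simp
    qed
    finally show "(\<integral>\<^sup>+ z. f (s(i := z)) \<partial>M)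
        = (\<integral>\<^sup>+ t. f (merge {i} (I - {i}) (t, s)) \<partial>PiM {i} (\<lambda>_. M))" .
  qed
  also have "\<dots> = integral\<^sup>N (PiM I (\<lambda>_. M)) f"
    by (rule nn_integral_PiM_merge_resample) (use i in auto)
  finally show "(\<integral>\<^sup>+ z. (\<integral>\<^sup>+ s. f (s(i := z)) \<partial>PiM I (\<lambda>_. M)) \<partial>M) = integral\<^sup>N (PiM I (\<lambda>_. M)) f" .
qed

end

section \<open>Conditional laws of W\<close>

context
  fixes PZ :: "'z measure" and K :: "(nat \<Rightarrow> 'z) \<Rightarrow> 'w::polish_space measure" and n :: nat
  assumes PZ: "prob_space PZ"
    and K: "K \<in> sample_law n PZ \<rightarrow>\<^sub>M prob_algebra (borel :: 'w measure)"
begin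

lemma sample_law_in_prob_algebra: "sample_law n PZ \<in> space (prob_algebra (sample_law n PZ))"
  unfolding sample_law_def using prob_space_PiM[of "{..<n}" "\<lambda>_. PZ"] PZ
  by (simp add: space_prob_algebra)

lemma measurable_resampled_kernel:
  assumes "J \<subseteq> {..<n}"
  shows "(\<lambda>(s, t). K (merge J ({..<n} - J) (t, s)))
           \<in> (sample_law n PZ \<Otimes>\<^sub>M PiM J (\<lambda>_. PZ)) \<rightarrow>\<^sub>M prob_algebra borel"
  using measurable_comp[OF measurable_merge_resample[OF assms] K[unfolded sample_law_def]]
  unfolding sample_law_def by (simp add: comp_def case_prod_beta')

lemma law_W_given_compl_kernel:
  assumes "J \<subseteq> {..<n}"
  shows "law_W_given_compl n PZ K J \<in> sample_law n PZ \<rightarrow>\<^sub>M prob_algebra borel"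
proof -
  have "PiM J (\<lambda>_. PZ) \<in> space (prob_algebra (PiM J (\<lambda>_. PZ)))"
    using prob_space_PiM[of J "\<lambda>_. PZ"] PZ by (simp add: space_prob_algebra)
  from measurable_bind_prob_space2[OF measurable_const[OF this] measurable_resampled_kernel[OF assms]]
  show ?thesis unfolding law_W_given_compl_def[abs_def] by simp
qed

lemma law_W_given_compl_fun_upd:
  "i \<in> J \<Longrightarrow> law_W_given_compl n PZ K J (s(i := z)) = law_W_given_compl n PZ K J s"
  unfolding law_W_given_compl_def
  by (rule bind_cong) (auto intro!: arg_cong[where f=K] simp: merge_def fun_eq_iff)

lemma bind_law_W_given_compl:
  assumes J: "J \<subseteq> {..<n}"
  shows "bind (sample_law n PZ) (law_W_given_compl n PZ K J) = law_W n PZ K"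
proof (rule measure_eqI)
  note \<mu> = sample_law_in_prob_algebra
  note Q = law_W_given_compl_kernel[OF J]
  show "sets (bind (sample_law n PZ) (law_W_given_compl n PZ K J)) = sets (law_W n PZ K)"
    unfolding law_W_def using sets_bind'[OF \<mu> Q] sets_bind'[OF \<mu> K] by simp
  fix A assume "A \<in> sets (bind (sample_law n PZ) (law_W_given_compl n PZ K J))"
  then have A: "A \<in> sets borel" using sets_bind'[OF \<mu> Q] by simp
  have PiJ: "PiM J (\<lambda>_. PZ) \<in> space (prob_algebra (PiM J (\<lambda>_. PZ)))"
    using prob_space_PiM[of J "\<lambda>_. PZ"] PZ by (simp add: space_prob_algebra)
  have "emeasure (bind (sample_law n PZ) (law_W_given_compl n PZ K J)) A
      = (\<integral>\<^sup>+ s. emeasure (law_W_given_compl n PZ K J s) A \<partial>sample_law n PZ)"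
    by (rule emeasure_bind_prob_algebra[OF \<mu> Q A])
  also have "\<dots> = (\<integral>\<^sup>+ s. (\<integral>\<^sup>+ t. emeasure (K (merge J ({..<n} - J) (t, s))) A \<partial>PiM J (\<lambda>_. PZ))
      \<partial>sample_law n PZ)"
    unfolding law_W_given_compl_def
    using emeasure_bind_prob_algebra[OF PiJ measurable_compose[OF measurable_Pair1' measurable_resampled_kernel[OF J]] A]
    by (intro nn_integral_cong) simp
  also have "\<dots> = (\<integral>\<^sup>+ s. emeasure (K s) A \<partial>sample_law n PZ)"
    unfolding sample_law_def
    by (rule nn_integral_PiM_merge_resample[OF PZ _ J])
       (use measurable_emeasure_kernel[OF measurable_prob_algebraD[OF K]] A in \<open>auto simp: sample_law_def\<close>)
  also have "\<dots> = emeasure (law_W n PZ K) A"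
    unfolding law_W_def by (rule emeasure_bind_prob_algebra[OF \<mu> K A, symmetric])
  finally show "emeasure (bind (sample_law n PZ) (law_W_given_compl n PZ K J)) A = emeasure (law_W n PZ K) A" .
qed

lemma measurable_fun_upd_sample_law:
  "i < n \<Longrightarrow> z \<in> space PZ \<Longrightarrow> (\<lambda>s. s(i := z)) \<in> sample_law n PZ \<rightarrow>\<^sub>M sample_law n PZ"
  unfolding sample_law_def using measurable_fun_upd_PiM_const[of i "{..<n}" z PZ] by simp

lemma distr_fun_upd_in_prob_algebra:
  "i < n \<Longrightarrow> z \<in> space PZ \<Longrightarrow>
    distr (sample_law n PZ) (sample_law n PZ) (\<lambda>s. s(i := z)) \<in> space (prob_algebra (sample_law n PZ))"
  using sample_law_in_prob_algebra measurable_fun_upd_sample_law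
  by (simp add: space_prob_algebra prob_space.prob_space_distr)

lemma bind_distr_fun_upd:
  assumes "i < n" "z \<in> space PZ" "L \<in> sample_law n PZ \<rightarrow>\<^sub>M prob_algebra borel"
  shows "bind (distr (sample_law n PZ) (sample_law n PZ) (\<lambda>s. s(i := z))) L
           = bind (sample_law n PZ) (\<lambda>s. L (s(i := z)))"
  using bind_distr[OF measurable_fun_upd_sample_law[OF assms(1,2)] measurable_prob_algebraD[OF assms(3)]]
    sample_law_in_prob_algebra
  by (simp add: space_prob_algebra prob_space.not_empty)

lemma nn_integral_wasserstein1_given_Zi_le:
  assumes iJ: "i \<in> J" and J: "J \<subseteq> {..<n}"
  shows "(\<integral>\<^sup>+ z. wasserstein1 (law_W_given_Zi n PZ K i z) (law_W n PZ K) \<partial>PZ)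
     \<le> (\<integral>\<^sup>+ s. wasserstein1 (K s) (law_W_given_compl n PZ K J s) \<partial>sample_law n PZ)"
proof (rule ennreal_le_epsilon)
  fix \<epsilon> :: real assume \<epsilon>: "0 < \<epsilon>"
  let ?\<mu> = "sample_law n PZ" and ?Q = "law_W_given_compl n PZ K J"
  have i: "i < n" using iJ J by auto
  obtain C where C_meas[measurable]: "C \<in> borel_measurable ?\<mu>"
    and C_le: "\<And>s. s \<in> space ?\<mu> \<Longrightarrow> C s \<le> wasserstein1 (K s) (?Q s) + ennreal (\<epsilon> / 2)"
    and bind_le: "\<And>\<nu>. \<nu> \<in> space (prob_algebra ?\<mu>) \<Longrightarrow>
       wasserstein1 (bind \<nu> K) (bind \<nu> ?Q) \<le> (\<integral>\<^sup>+ s. C s \<partial>\<nu>) + ennreal (\<epsilon> / 2)"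
    using wasserstein1_bind_le[OF K law_W_given_compl_kernel[OF J], of "\<epsilon> / 2"] \<epsilon> by auto
  have pointwise: "wasserstein1 (law_W_given_Zi n PZ K i z) (law_W n PZ K)
      \<le> (\<integral>\<^sup>+ s. C (s(i := z)) \<partial>?\<mu>) + ennreal (\<epsilon> / 2)" if z: "z \<in> space PZ" for z
  proof -
    let ?\<nu> = "distr ?\<mu> ?\<mu> (\<lambda>s. s(i := z))"
    have "bind ?\<nu> K = law_W_given_Zi n PZ K i z"
      unfolding law_W_given_Zi_def by (rule bind_distr_fun_upd[OF i z K])
    moreover have "bind ?\<nu> ?Q = law_W n PZ K"
      using bind_distr_fun_upd[OF i z law_W_given_compl_kernel[OF J]]
      by (simp add: law_W_given_compl_fun_upd[OF iJ] bind_law_W_given_compl[OF J])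
    moreover have "(\<integral>\<^sup>+ s. C s \<partial>?\<nu>) = (\<integral>\<^sup>+ s. C (s(i := z)) \<partial>?\<mu>)"
      by (rule nn_integral_distr[OF measurable_fun_upd_sample_law[OF i z]]) simp
    ultimately show ?thesis
      using bind_le[OF distr_fun_upd_in_prob_algebra[OF i z]] by simp
  qed
  interpret PZ: prob_space PZ by (rule PZ)
  have C_upd: "(\<lambda>z. \<integral>\<^sup>+ s. C (s(i := z)) \<partial>?\<mu>) \<in> borel_measurable PZ"
    and C_int: "(\<integral>\<^sup>+ z. (\<integral>\<^sup>+ s. C (s(i := z)) \<partial>?\<mu>) \<partial>PZ) = integral\<^sup>N ?\<mu> C"
    using nn_integral_PiM_fun_upd[OF PZ _ _ C_meas[unfolded sample_law_def], of i] i
    unfolding sample_law_def by auto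
  have "(\<integral>\<^sup>+ z. wasserstein1 (law_W_given_Zi n PZ K i z) (law_W n PZ K) \<partial>PZ)
      \<le> (\<integral>\<^sup>+ z. (\<integral>\<^sup>+ s. C (s(i := z)) \<partial>?\<mu>) + ennreal (\<epsilon> / 2) \<partial>PZ)"
    by (intro nn_integral_mono pointwise)
  also have "\<dots> = integral\<^sup>N ?\<mu> C + ennreal (\<epsilon> / 2)"
    using C_upd by (simp add: nn_integral_add PZ.emeasure_space_1 C_int)
  also have "integral\<^sup>N ?\<mu> C \<le> (\<integral>\<^sup>+ s. wasserstein1 (K s) (?Q s) \<partial>?\<mu>) + ennreal (\<epsilon> / 2)"
    using sample_law_in_prob_algebra
    by (intro nn_integral_le_plus_const C_le C_meas) (simp add: space_prob_algebra)
  finally show "(\<integral>\<^sup>+ z. wasserstein1 (law_W_given_Zi n PZ K i z) (law_W n PZ K) \<partial>PZ)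
      \<le> (\<integral>\<^sup>+ s. wasserstein1 (K s) (?Q s) \<partial>?\<mu>) + ennreal \<epsilon>"
    using \<epsilon> by (simp add: add.assoc ennreal_plus[symmetric] del: ennreal_plus)
qed

end

lemma card_subsets_containing:
  assumes i: "i < n" and m: "1 \<le> m"
  shows "card {J. J \<subseteq> {..<n} \<and> card J = m \<and> i \<in> J} = (n - 1) choose (m - 1)"
proof -
  define A where "A = {J. J \<subseteq> {..<n} \<and> card J = m \<and> i \<in> J}"
  define B where "B = {J. J \<subseteq> {..<n} - {i} \<and> card J = m - 1}"
  have "bij_betw (\<lambda>J. J - {i}) A B"
  proof (rule bij_betwI[where g="insert i"])
    show "(\<lambda>J. J - {i}) \<in> A \<rightarrow> B"
      unfolding A_def B_def by (auto dest: finite_subset[OF _ finite_lessThan])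
    show "insert i \<in> B \<rightarrow> A"
    proof
      fix J assume "J \<in> B"
      then have J: "J \<subseteq> {..<n} - {i}" "card J = m - 1" unfolding B_def by auto
      moreover have "finite J" "i \<notin> J" using J(1) finite_subset by auto
      ultimately show "insert i J \<in> A" unfolding A_def using i m by (auto simp: card_insert_disjoint)
    qed
  qed (auto simp: A_def B_def)
  then have "card A = card B" by (rule bij_betw_same_card)
  also have "card B = (n - 1) choose (m - 1)"
    unfolding B_def using n_subsets[of "{..<n} - {i}" "m - 1"] i by simp
  finally show ?thesis unfolding A_def .
qed

lemma double_counting_subsets:
  fixes A :: "nat \<Rightarrow> ennreal" and B :: "nat set \<Rightarrow> ennreal"
  assumes m: "1 \<le> m" and AB: "\<And>i J. J \<subseteq> {..<n} \<Longrightarrow> card J = m \<Longrightarrow> i \<in> J \<Longrightarrow> A i \<le> B J"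
  shows "of_nat ((n - 1) choose (m - 1)) * (\<Sum>i<n. A i) \<le> of_nat m * (\<Sum>J | J \<subseteq> {..<n} \<and> card J = m. B J)"
proof -
  define \<J> where "\<J> = {J. J \<subseteq> {..<n} \<and> card J = m}"
  have fin: "finite \<J>" unfolding \<J>_def by (rule finite_subset[of _ "Pow {..<n}"]) auto
  have "of_nat ((n - 1) choose (m - 1)) * (\<Sum>i<n. A i) = (\<Sum>i<n. \<Sum>J | J \<in> \<J> \<and> i \<in> J. A i)"
    unfolding \<J>_def using card_subsets_containing[OF _ m] by (simp add: sum_distrib_left conj_assoc)
  also have "\<dots> = (\<Sum>J\<in>\<J>. \<Sum>i | i \<in> {..<n} \<and> i \<in> J. A i)"
    by (rule sum.swap_restrict[symmetric]) (auto simp: fin)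
  also have "\<dots> = (\<Sum>J\<in>\<J>. \<Sum>i\<in>J. A i)"
    by (intro sum.cong refl) (auto simp: \<J>_def)
  also have "\<dots> \<le> (\<Sum>J\<in>\<J>. \<Sum>i\<in>J. B J)"
    by (intro sum_mono AB) (auto simp: \<J>_def)
  also have "\<dots> = of_nat m * (\<Sum>J\<in>\<J>. B J)"
    by (simp add: \<J>_def sum_distrib_left)
  finally show ?thesis unfolding \<J>_def .
qed

lemma average_le_average_subsets:
  fixes A :: "nat \<Rightarrow> ennreal" and B :: "nat set \<Rightarrow> ennreal"
  assumes m: "1 \<le> m" "m \<le> n"
    and AB: "\<And>i J. J \<subseteq> {..<n} \<Longrightarrow> card J = m \<Longrightarrow> i \<in> J \<Longrightarrow> A i \<le> B J"
  shows "(\<Sum>i<n. A i) / of_nat n \<le> (\<Sum>J \<in> {J. J \<subseteq> {..<n} \<and> card J = m}. B J) / of_nat (n choose m)"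
proof -
  define a b c C where "a = (\<Sum>i<n. A i)" and "b = (\<Sum>J \<in> {J. J \<subseteq> {..<n} \<and> card J = m}. B J)"
    and "c = (n - 1) choose (m - 1)" and "C = n choose m"
  have pos: "0 < n" "0 < m" "0 < c" "0 < C"
    using m by (auto simp: c_def C_def)
  have binom: "real m * real C = real n * real c"
    unfolding c_def C_def using times_binomial_minus1_eq[OF pos(2), of n] by (metis of_nat_mult)
  have div: "x / of_nat k = x * ennreal (1 / real k)" if "0 < k" for x :: ennreal and k :: nat
    using that by (simp add: divide_ennreal_def inverse_ennreal ennreal_of_nat_eq_real_of_nat inverse_eq_divide)
  have n_C: "ennreal (1 / real n) = ennreal (real c) * ennreal (1 / (real m * real C))"
    using pos binom by (simp add: ennreal_mult[symmetric] field_simps)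
  have m_C: "of_nat m * ennreal (1 / (real m * real C)) = ennreal (1 / real C)"
    using pos by (simp add: ennreal_of_nat_eq_real_of_nat ennreal_mult[symmetric] field_simps)
  have "a / of_nat n = (of_nat c * a) * ennreal (1 / (real m * real C))"
    unfolding div[OF pos(1)] n_C by (simp add: ennreal_of_nat_eq_real_of_nat ac_simps)
  also have "\<dots> \<le> (of_nat m * b) * ennreal (1 / (real m * real C))"
    using double_counting_subsets[OF m(1) AB] unfolding a_def b_def c_def
    by (intro mult_right_mono) auto
  also have "\<dots> = b * (of_nat m * ennreal (1 / (real m * real C)))"
    by (simp only: ac_simps)
  also have "\<dots> = b / of_nat C"
    unfolding m_C div[OF pos(4)] ..
  finally show ?thesis unfolding a_def b_def C_def .
qed

theorem proposition3:
  fixes PZ :: "'z measure"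
    and K :: "(nat \<Rightarrow> 'z) \<Rightarrow> 'w::polish_space measure"
    and n m :: nat
  assumes "prob_space PZ"
    and "K \<in> sample_law n PZ \<rightarrow>\<^sub>M prob_algebra (borel :: 'w measure)"
    and "1 \<le> m" and "m \<le> n"
  shows "(\<Sum>i<n. \<integral>\<^sup>+ z. wasserstein1 (law_W_given_Zi n PZ K i z) (law_W n PZ K) \<partial>PZ) / of_nat n
     \<le> (\<Sum>J \<in> {J. J \<subseteq> {..<n} \<and> card J = m}.
           \<integral>\<^sup>+ s. wasserstein1 (K s) (law_W_given_compl n PZ K J s) \<partial>sample_law n PZ)
         / of_nat (n choose m)"
  using assms(3,4) nn_integral_wasserstein1_given_Zi_le[OF assms(1,2)]
  by (rule average_le_average_subsets)

end
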